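(* Let $\mathcal{W}$ be a periodic labeled wedge of period $p$ and preperiod $q$, with associated graph $\Gamma$, and for $k\in\mathbb{N}$ let $A_k$ be the adjacency operator of $\Gamma_k=\Gamma/\equiv_{kp,q}$. Then for every $k\in\mathbb{N}$, the characteristic polynomial of $A_k$ acting on $\mathbb{R}^{\mathcal{V}_k}$ is the product of the characteristic polynomial of $A_1$ acting on $\mathbb{R}^{\mathcal{V}_1}$, of cyclotomic polynomials, and of $x^d$ for some integer $d\ge0$.
   Context: The unlabeled wedge is $\Sigma=\{(i,j)\in\mathbb{N}^2:1\le i\le j\}$; a labeled wedge is a map $\Phi:\Sigma\to\{N,S,E\}$ (non-separated, separated, equivalent). Its graph $\Gamma$ has vertex set $\Sigma$ and edges: none out of an $E$-vertex; one edge $(i,j)\to(i+1,j+1)$ out of an $N$-vertex; two edges $(i,j)\to(1,i+1)$ and $(i,j)\to(1,j+1)$ out of an $S$-vertex. For integers $p\ge1$, $q\ge0$, $\equiv_{p,q}$ on $\mathbb{N}$ is: $i\equiv_{p,q}j$ iff $i=j$, or $\min\{i,j\}\ge q+1$ and $i\equiv j\pmod p$; on $\Sigma$, $(i,j)\equiv_{p,q}(k,l)$ iff ($i\equiv_{p,q}k$ and $j\equiv_{p,q}l$) or ($i\equiv_{p,q}l$ and $j\equiv_{p,q}k$). $\mathcal{W}$ is periodic of period $p$ and preperiod $q$ if (1) $\equiv_{p,q}$-equivalent vertices have the same label and (2) $(i,j)$ is labeled $E$ iff $i\equiv_{p,q}j$. For such $\mathcal{W}$ and $k\ge1$, $\Gamma_k$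 is the quotient graph: its vertex set $\mathcal{V}_k$ is the set of $\equiv_{kp,q}$-classes, and the number of edges from $[v]$ to $[w]$ is the number of edges in $\Gamma$ from $v$ to members of $[w]$ (independent of the representative $v$). The adjacency operator $A_k$ on $\mathbb{R}^{\mathcal{V}_k}$ is $A_k(e_v)=\sum_{w}\#(v\to w)\,e_w$. Characteristic polynomials are $\det(xI-A)$. *)

theory Defs
  imports "Jordan_Normal_Form.Char_Poly" "HOL-Computational_Algebra.Polynomial"
begin

datatype label = N | S | E

definition wedge :: "(nat \<times> nat) set" where
  "wedge = {(i,j). 1 \<le> i \<and> i \<le> j}"

definition eqv_nat :: "nat \<Rightarrow> nat \<Rightarrow> nat \<Rightarrow> nat \<Rightarrow> bool" where
  "eqv_nat p q i j \<longleftrightarrow> i = j \<or> (min i j \<ge> q + 1 \<and> i mod p = j mod p)"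

definition eqv_wedge :: "nat \<Rightarrow> nat \<Rightarrow> nat \<times> nat \<Rightarrow> nat \<times> nat \<Rightarrow> bool" where
  "eqv_wedge p q v w \<longleftrightarrow>
     (eqv_nat p q (fst v) (fst w) \<and> eqv_nat p q (snd v) (snd w)) \<or>
     (eqv_nat p q (fst v) (snd w) \<and> eqv_nat p q (snd v) (fst w))"

text \<open>A labeled wedge is a map Sigma -> {N,S,E}; values outside Sigma are irrelevant.
  Periodicity with period p and preperiod q.\<close>
definition periodic_wedge :: "((nat \<times> nat) \<Rightarrow> label) \<Rightarrow> nat \<Rightarrow> nat \<Rightarrow> bool" where
  "periodic_wedge \<Phi> p q \<longleftrightarrow> p \<ge> 1 \<and>
     (\<forall>v\<in>wedge. \<forall>w\<in>wedge. eqv_wedge p q v w \<longrightarrow> \<Phi> v = \<Phi> w) \<and>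
     (\<forall>(i,j)\<in>wedge. \<Phi> (i,j) = E \<longleftrightarrow> eqv_nat p q i j)"

text \<open>Targets of the edges of the graph Gamma out of a vertex (as a list, with multiplicity).\<close>
definition edge_targets :: "((nat \<times> nat) \<Rightarrow> label) \<Rightarrow> nat \<times> nat \<Rightarrow> (nat \<times> nat) list" where
  "edge_targets \<Phi> v = (case \<Phi> v of
       E \<Rightarrow> []
     | N \<Rightarrow> [(fst v + 1, snd v + 1)]
     | S \<Rightarrow> [(1, fst v + 1), (1, snd v + 1)])"

definition wclass :: "nat \<Rightarrow> nat \<Rightarrow> nat \<times> nat \<Rightarrow> (nat \<times> nat) set" where
  "wclass p q v = {w \<in> wedge. eqv_wedge p q v w}"

definition quot_vertices :: "nat \<Rightarrow> nat \<Rightarrow> (nat \<times> nat) set set" where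
  "quot_vertices p q = wclass p q ` wedge"

definition quot_edges :: "((nat \<times> nat) \<Rightarrow> label) \<Rightarrow> (nat \<times> nat) set \<Rightarrow> (nat \<times> nat) set \<Rightarrow> nat" where
  "quot_edges \<Phi> C D = length (filter (\<lambda>t. t \<in> D) (edge_targets \<Phi> (SOME v. v \<in> C)))"

text \<open>Matrix of the adjacency operator A (A e_C = sum_D #(C->D) e_D), i.e. column C has
  entries #(C->D), w.r.t. an (arbitrary) enumeration of the finite vertex set.\<close>
definition vertex_enum :: "nat \<Rightarrow> nat \<Rightarrow> nat \<Rightarrow> (nat \<times> nat) set" where
  "vertex_enum p q = (SOME f. bij_betw f {..<card (quot_vertices p q)} (quot_vertices p q))"

definition adj_matrix :: "((nat \<times> nat) \<Rightarrow> label) \<Rightarrow> nat \<Rightarrow> nat \<Rightarrow> real mat" where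
  "adj_matrix \<Phi> p q = (let n = card (quot_vertices p q); f = vertex_enum p q in
     mat n n (\<lambda>(r, c). real (quot_edges \<Phi> (f c) (f r))))"

definition cyclotomic :: "nat \<Rightarrow> complex poly" where
  "cyclotomic n = (\<Prod>j\<in>{j. j < n \<and> coprime j n}. [:- cis (2 * pi * real j / real n), 1:])"

end

theory Submission
  imports Defs
begin

text \<open>
  The vertices of \<open>\<Gamma>\<^sub>k\<^sub>p\<close> are represented by the pairs \<open>(a, b)\<close> with \<open>1 \<le> a \<le> b \<le> q + k p\<close>,
  and reducing both coordinates modulo \<open>\<equiv>\<^sub>p\<^sub>,\<^sub>q\<close> maps \<open>\<Gamma>\<^sub>k\<^sub>p\<close> onto \<open>\<Gamma>\<^sub>p\<close>. Replace every
  coordinate above \<open>q + p\<close> by its difference with its reduction. This unitriangular change of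
  basis puts \<open>A\<^sub>k\<^sub>p\<close> in block triangular form, since the new basis vectors with a high coordinate
  span the kernel of the projection; the diagonal blocks are \<open>A\<^sub>p\<close>, a mixed block (one coordinate
  high) and a high block (both coordinates high).

  The characteristic polynomial of the matrix of a partial map is a power of \<open>x\<close> times a product
  of factors \<open>x\<^sup>m - 1\<close>, one for each cycle, hence of cyclotomic polynomials. The same block decomposition applied to an
  auxiliary partial map, which keeps the first coordinate reduced, exhibits the mixed block as a
  quotient of two such polynomials. The high block only sees the labels \<open>N\<close>: replacing every \<open>S\<close>
  by \<open>E\<close> leaves it unchanged and turns \<open>A\<^sub>k\<^sub>p\<close> into the matrix of a partial map, so the high
  block is such a quotient as well.
\<close>

section \<open>Matrices indexed by finite sets\<close>

text \<open>\<open>M y x\<close> is the entry in row \<open>y\<close> and column \<open>x\<close>.\<close>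
type_synonym ('a, 'b) fmat = "'a \<Rightarrow> 'a \<Rightarrow> 'b"

definition set_enum :: "'a set \<Rightarrow> nat \<Rightarrow> 'a" where
  "set_enum X = (SOME f. bij_betw f {..<card X} X)"

definition mat_of_fmat :: "'a set \<Rightarrow> ('a, 'b) fmat \<Rightarrow> 'b mat" where
  "mat_of_fmat X M = mat (card X) (card X) (\<lambda>(i, j). M (set_enum X i) (set_enum X j))"

definition fchar_poly :: "'a set \<Rightarrow> ('a, 'b::comm_ring_1) fmat \<Rightarrow> 'b poly" where
  "fchar_poly X M = char_poly (mat_of_fmat X M)"

definition fmat_vec :: "'a set \<Rightarrow> ('a, 'b::comm_semiring_0) fmat \<Rightarrow> ('a \<Rightarrow> 'b) \<Rightarrow> 'a \<Rightarrow> 'b" where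
  "fmat_vec X M v y = (\<Sum>x\<in>X. M y x * v x)"

definition fmat_mult :: "'a set \<Rightarrow> ('a, 'b::comm_semiring_0) fmat \<Rightarrow> ('a, 'b) fmat \<Rightarrow> ('a, 'b) fmat" where
  "fmat_mult X A B y x = fmat_vec X A (\<lambda>z. B z x) y"

definition fmat_one :: "('a, 'b::{zero,one}) fmat" where
  "fmat_one y x = (if y = x then 1 else 0)"

lemma bij_betw_set_enum: "finite X \<Longrightarrow> bij_betw (set_enum X) {..<card X} X"
proof -
  assume "finite X"
  then have "\<exists>f. bij_betw f {..<card X} X"
    using ex_bij_betw_nat_finite[of X] by (simp add: atLeast0LessThan)
  then show ?thesis unfolding set_enum_def by (rule someI_ex)
qed

lemma sum_bij_delta:
  assumes "bij_betw h {..<(n::nat)} X" "x \<in> X"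
  shows "(\<Sum>k<n. if h k = x then f k else (0::'b::comm_monoid_add)) = f (inv_into {..<n} h x)"
proof -
  define m where "m = inv_into {..<n} h x"
  have m: "m < n" "h m = x" using assms unfolding m_def
    by (auto simp: bij_betw_def intro: inv_into_into f_inv_into_f)
  have "(\<Sum>k<n. if h k = x then f k else 0) = (\<Sum>k<n. if k = m then f k else 0)"
    using assms m by (intro sum.cong) (auto simp: bij_betw_def inj_on_def)
  then show ?thesis using m(1) by (simp add: m_def)
qed

lemma bij_transfer_mat_mult:
  assumes g: "bij_betw g {..<n} X" and h: "bij_betw h {..<n} X"
  shows "mat n n (\<lambda>(i, j). if g i = h j then 1 else 0) * mat n n (\<lambda>(i, j). if h i = g j then 1 else 0)
    = (1\<^sub>m n :: 'b::comm_ring_1 mat)" (is "?A = _")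
proof (rule eq_matI)
  fix i j assume ij: "i < dim_row (1\<^sub>m n :: 'b mat)" "j < dim_col (1\<^sub>m n :: 'b mat)"
  have gX: "g i \<in> X" if "i < n" for i using g that by (auto simp: bij_betw_def)
  have ginj: "g i = g j \<longleftrightarrow> i = j" if "i < n" "j < n" for i j
    using g that by (auto simp: bij_betw_def inj_on_def)
  have "?A $$ (i, j) = (\<Sum>k<n. if h k = g i then (if h k = g j then 1 else 0) else (0::'b))"
    using ij by (auto simp: scalar_prod_def atLeast0LessThan intro!: sum.cong)
  also have "\<dots> = (if i = j then 1 else 0)"
    using ij h by (simp add: sum_bij_delta[OF h gX] gX ginj bij_betw_def f_inv_into_f)
  also have "\<dots> = 1\<^sub>m n $$ (i, j)" using ij by simp
  finally show "?A $$ (i, j) = 1\<^sub>m n $$ (i, j)" .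
qed auto

lemma char_poly_reindex:
  fixes M :: "('a, 'b::comm_ring_1) fmat"
  assumes g: "bij_betw g {..<n} X" and h: "bij_betw h {..<n} X"
  shows "char_poly (mat n n (\<lambda>(i, j). M (g i) (g j))) = char_poly (mat n n (\<lambda>(i, j). M (h i) (h j)))"
proof -
  define P :: "'b mat" where "P = mat n n (\<lambda>(i, j). if g i = h j then 1 else 0)"
  define Q :: "'b mat" where "Q = mat n n (\<lambda>(i, j). if h i = g j then 1 else 0)"
  define B where "B = mat n n (\<lambda>(i, j). M (h i) (h j))"
  have gX: "g i \<in> X" if "i < n" for i using g that by (auto simp: bij_betw_def)
  have hinv: "inv_into {..<n} h x < n" "h (inv_into {..<n} h x) = x" if "x \<in> X" for x
    using h that by (auto simp: bij_betw_def intro: inv_into_into f_inv_into_f)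
  have "mat n n (\<lambda>(i, j). M (g i) (g j)) = P * B * Q"
  proof (rule eq_matI)
    fix i j assume "i < dim_row (P * B * Q)" "j < dim_col (P * B * Q)"
    then have ij: "i < n" "j < n" by (auto simp: P_def Q_def)
    have "(P * B * Q) $$ (i, j) = (\<Sum>l<n. if h l = g j then (P * B) $$ (i, l) else 0)"
      using ij by (auto simp: P_def Q_def B_def scalar_prod_def atLeast0LessThan intro!: sum.cong)
    also have "\<dots> = (P * B) $$ (i, inv_into {..<n} h (g j))"
      by (rule sum_bij_delta[OF h gX[OF ij(2)]])
    also have "\<dots> = (\<Sum>k<n. if h k = g i then B $$ (k, inv_into {..<n} h (g j)) else 0)"
      using ij hinv[OF gX[OF ij(2)]]
      by (auto simp: P_def B_def scalar_prod_def atLeast0LessThan intro!: sum.cong)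
    also have "\<dots> = B $$ (inv_into {..<n} h (g i), inv_into {..<n} h (g j))"
      by (rule sum_bij_delta[OF h gX[OF ij(1)]])
    also have "\<dots> = M (g i) (g j)"
      using ij by (simp add: B_def hinv gX)
    finally show "mat n n (\<lambda>(i, j). M (g i) (g j)) $$ (i, j) = (P * B * Q) $$ (i, j)"
      using ij by simp
  qed (auto simp: P_def Q_def)
  then have "similar_mat (mat n n (\<lambda>(i, j). M (g i) (g j))) B"
    using bij_transfer_mat_mult[OF g h] bij_transfer_mat_mult[OF h g]
    by (intro similar_matI[where P = P and Q = Q]) (auto simp: P_def Q_def B_def)
  then show ?thesis unfolding B_def by (rule char_poly_similar)
qed

lemma fchar_poly_bij:
  assumes "finite X" "bij_betw g {..<n} X"
  shows "char_poly (mat n n (\<lambda>(i, j). M (g i) (g j))) = fchar_poly X M"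
proof -
  have n: "n = card X" using assms(2) by (metis bij_betw_same_card card_lessThan)
  show ?thesis unfolding fchar_poly_def mat_of_fmat_def n
    by (rule char_poly_reindex[OF assms(2)[unfolded n] bij_betw_set_enum[OF assms(1)]])
qed

lemma mat_of_fmat_cong:
  assumes "finite X" "\<And>x y. x \<in> X \<Longrightarrow> y \<in> X \<Longrightarrow> M y x = M' y x"
  shows "mat_of_fmat X M = mat_of_fmat X M'"
  unfolding mat_of_fmat_def using bij_betw_set_enum[OF assms(1)] assms(2)
  by (intro eq_matI) (auto simp: bij_betw_def)

lemma fchar_poly_cong:
  assumes "finite X" "\<And>x y. x \<in> X \<Longrightarrow> y \<in> X \<Longrightarrow> M y x = M' y x"
  shows "fchar_poly X M = fchar_poly X M'"
  unfolding fchar_poly_def using mat_of_fmat_cong[OF assms] by simp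

lemma fchar_poly_empty: "fchar_poly {} M = 1"
  unfolding fchar_poly_def char_poly_def mat_of_fmat_def
  by (rule det_dim_zero) (simp add: char_poly_matrix_def)

lemma fchar_poly_singleton: "fchar_poly {x} M = [:- M x x, 1:]"
proof -
  have "bij_betw (\<lambda>_. x) {..<1::nat} {x}" by (auto simp: bij_betw_def inj_on_def)
  then have "fchar_poly {x} M = char_poly (mat 1 1 (\<lambda>(i, j). M x x))"
    using fchar_poly_bij[of "{x}" "\<lambda>_. x" 1 M] by simp
  also have "\<dots> = [:- M x x, 1:]"
    unfolding char_poly_def by (subst det_single) (auto simp: char_poly_matrix_def)
  finally show ?thesis .
qed

lemma char_poly_four_block_lower_zero:
  fixes A1 :: "'a::idom mat"
  assumes A1: "A1 \<in> carrier_mat n1 n1" and A2: "A2 \<in> carrier_mat n2 n2" and B: "B \<in> carrier_mat n1 n2"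
  shows "char_poly (four_block_mat A1 B (0\<^sub>m n2 n1) A2) = char_poly A1 * char_poly A2"
proof -
  have "char_poly_matrix (four_block_mat A1 B (0\<^sub>m n2 n1) A2) =
    four_block_mat (char_poly_matrix A1) (map_mat (\<lambda>a. [:- a:]) B) (0\<^sub>m n2 n1) (char_poly_matrix A2)"
    using A1 A2 B by (intro eq_matI) (auto simp: char_poly_matrix_def)
  moreover have "det (four_block_mat (char_poly_matrix A1) (map_mat (\<lambda>a. [:- a:]) B) (0\<^sub>m n2 n1)
      (char_poly_matrix A2)) = det (char_poly_matrix A1) * det (char_poly_matrix A2)"
    by (rule det_four_block_mat_lower_left_zero) (use A1 A2 B in auto)
  ultimately show ?thesis by (simp add: char_poly_def)
qed

lemma fchar_poly_invariant_subset:
  fixes M :: "('a, 'b::idom) fmat"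
  assumes fin: "finite X1" "finite X2" and disj: "X1 \<inter> X2 = {}"
    and inv: "\<And>x y. x \<in> X1 \<Longrightarrow> y \<in> X2 \<Longrightarrow> M y x = 0"
  shows "fchar_poly (X1 \<union> X2) M = fchar_poly X1 M * fchar_poly X2 M"
proof -
  define n1 n2 e1 e2 where "n1 = card X1" "n2 = card X2" "e1 = set_enum X1" "e2 = set_enum X2"
  have b1: "bij_betw e1 {..<n1} X1" and b2: "bij_betw e2 {..<n2} X2"
    unfolding n1_n2_e1_e2_def by (simp_all add: bij_betw_set_enum fin)
  define g where "g i = (if i < n1 then e1 i else e2 (i - n1))" for i
  have "bij_betw (\<lambda>i. i - n1) {n1..<n1 + n2} {..<n2}"
    by (rule bij_betwI[where g = "\<lambda>i. i + n1"]) auto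
  from bij_betw_trans[OF this b2] have b2': "bij_betw (\<lambda>i. e2 (i - n1)) {n1..<n1 + n2} X2"
    by (simp add: comp_def)
  have "bij_betw g ({..<n1} \<union> {n1..<n1 + n2}) (X1 \<union> X2)"
  proof (rule bij_betw_combine[OF _ _ disj])
    show "bij_betw g {..<n1} X1" using b1 by (rule bij_betw_cong[THEN iffD1, rotated]) (auto simp: g_def)
    show "bij_betw g {n1..<n1 + n2} X2" using b2' by (rule bij_betw_cong[THEN iffD1, rotated]) (auto simp: g_def)
  qed
  moreover have "{..<n1} \<union> {n1..<n1 + n2} = {..<n1 + n2}" by auto
  ultimately have bg: "bij_betw g {..<n1 + n2} (X1 \<union> X2)" by simp
  have e1X: "e1 i \<in> X1" if "i < n1" for i using b1 that by (auto simp: bij_betw_def)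
  have e2X: "e2 i \<in> X2" if "i < n2" for i using b2 that by (auto simp: bij_betw_def)
  define B where "B = mat n1 n2 (\<lambda>(i, j). M (e1 i) (e2 j))"
  have "mat (n1 + n2) (n1 + n2) (\<lambda>(i, j). M (g i) (g j))
      = four_block_mat (mat_of_fmat X1 M) B (0\<^sub>m n2 n1) (mat_of_fmat X2 M)"
    by (intro eq_matI) (auto simp: g_def B_def mat_of_fmat_def n1_n2_e1_e2_def[symmetric] intro!: inv e1X e2X)
  then have "fchar_poly (X1 \<union> X2) M = char_poly (four_block_mat (mat_of_fmat X1 M) B (0\<^sub>m n2 n1) (mat_of_fmat X2 M))"
    using fchar_poly_bij[OF _ bg, of M] fin by simp
  also have "\<dots> = fchar_poly X1 M * fchar_poly X2 M"
    unfolding fchar_poly_def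
    by (rule char_poly_four_block_lower_zero) (auto simp: n1_n2_e1_e2_def B_def mat_of_fmat_def)
  finally show ?thesis .
qed

lemma mat_of_fmat_mult:
  assumes "finite X"
  shows "mat_of_fmat X (fmat_mult X A B) = mat_of_fmat X A * mat_of_fmat X B"
proof (rule eq_matI)
  fix i j assume "i < dim_row (mat_of_fmat X A * mat_of_fmat X B)" "j < dim_col (mat_of_fmat X A * mat_of_fmat X B)"
  then have ij: "i < card X" "j < card X" by (auto simp: mat_of_fmat_def)
  have "(mat_of_fmat X A * mat_of_fmat X B) $$ (i, j)
      = (\<Sum>k<card X. A (set_enum X i) (set_enum X k) * B (set_enum X k) (set_enum X j))"
    using ij by (auto simp: scalar_prod_def mat_of_fmat_def atLeast0LessThan)
  also have "\<dots> = (\<Sum>z\<in>X. A (set_enum X i) z * B z (set_enum X j))"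
    by (rule sum.reindex_bij_betw[OF bij_betw_set_enum[OF assms]])
  finally show "mat_of_fmat X (fmat_mult X A B) $$ (i, j) = (mat_of_fmat X A * mat_of_fmat X B) $$ (i, j)"
    using ij by (simp add: mat_of_fmat_def fmat_mult_def fmat_vec_def)
qed (auto simp: mat_of_fmat_def)

lemma mat_of_fmat_one:
  assumes "finite X" "\<And>x y. x \<in> X \<Longrightarrow> y \<in> X \<Longrightarrow> I y x = fmat_one y x"
  shows "mat_of_fmat X I = 1\<^sub>m (card X)"
proof -
  have b: "bij_betw (set_enum X) {..<card X} X" by (rule bij_betw_set_enum[OF assms(1)])
  then have X: "set_enum X i \<in> X" if "i < card X" for i using that by (auto simp: bij_betw_def)
  have inj: "set_enum X i = set_enum X j \<longleftrightarrow> i = j" if "i < card X" "j < card X" for i j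
    using b that by (auto simp: bij_betw_def inj_on_def)
  show ?thesis unfolding mat_of_fmat_def
    by (intro eq_matI) (auto simp: assms(2)[OF X X] inj fmat_one_def)
qed

lemma fchar_poly_similar:
  fixes P Q M :: "('a, 'b::comm_ring_1) fmat"
  assumes fin: "finite X"
    and PQ: "\<And>x y. x \<in> X \<Longrightarrow> y \<in> X \<Longrightarrow> fmat_mult X P Q y x = fmat_one y x"
    and QP: "\<And>x y. x \<in> X \<Longrightarrow> y \<in> X \<Longrightarrow> fmat_mult X Q P y x = fmat_one y x"
  shows "fchar_poly X (fmat_mult X (fmat_mult X P M) Q) = fchar_poly X M"
proof -
  have "similar_mat (mat_of_fmat X (fmat_mult X (fmat_mult X P M) Q)) (mat_of_fmat X M)"
  proof (rule similar_matI)
    show "mat_of_fmat X P * mat_of_fmat X Q = 1\<^sub>m (card X)"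
      using mat_of_fmat_mult[OF fin, of P Q] mat_of_fmat_one[OF fin PQ] by simp
    show "mat_of_fmat X Q * mat_of_fmat X P = 1\<^sub>m (card X)"
      using mat_of_fmat_mult[OF fin, of Q P] mat_of_fmat_one[OF fin QP] by simp
    show "mat_of_fmat X (fmat_mult X (fmat_mult X P M) Q) = mat_of_fmat X P * mat_of_fmat X M * mat_of_fmat X Q"
      by (simp add: mat_of_fmat_mult[OF fin])
  qed (auto simp: mat_of_fmat_def)
  then show ?thesis unfolding fchar_poly_def by (rule char_poly_similar)
qed

lemma fmat_vec_add: "fmat_vec X M (\<lambda>x. f x + g x) y = fmat_vec X M f y + fmat_vec X M g y"
  by (simp add: fmat_vec_def distrib_left sum.distrib)

lemma fmat_vec_diff:
  fixes M :: "('a, 'b::comm_ring) fmat"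
  shows "fmat_vec X M (\<lambda>x. f x - g x) y = fmat_vec X M f y - fmat_vec X M g y"
  by (simp add: fmat_vec_def right_diff_distrib sum_subtractf)

lemma fmat_vec_zero: "fmat_vec X M (\<lambda>x. 0) y = 0"
  by (simp add: fmat_vec_def)

lemma fmat_vec_indicator:
  fixes M :: "('a, 'b::comm_semiring_1) fmat"
  assumes "finite X" "t \<in> X"
  shows "fmat_vec X M (\<lambda>x. if P \<and> x = t then 1 else 0) y = (if P then M y t else 0)"
proof -
  have "fmat_vec X M (\<lambda>x. if P \<and> x = t then 1 else 0) y = (\<Sum>x\<in>X. if x = t then (if P then M y x else 0) else 0)"
    unfolding fmat_vec_def by (rule sum.cong) auto
  then show ?thesis using assms by simp
qed

lemma fmat_mult_assoc: "finite X \<Longrightarrow> fmat_mult X (fmat_mult X A B) C = fmat_mult X A (fmat_mult X B C)"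
  unfolding fmat_mult_def fmat_vec_def
  by (auto simp: sum_distrib_left sum_distrib_right mult.assoc intro!: ext) (rule sum.swap)

lemma fmat_mult_add_left: "fmat_mult X (\<lambda>y x. A y x + B y x) C y x = fmat_mult X A C y x + fmat_mult X B C y x"
  by (simp add: fmat_mult_def fmat_vec_def distrib_right sum.distrib)

lemma fmat_mult_add_right: "fmat_mult X A (\<lambda>y x. B y x + C y x) y x = fmat_mult X A B y x + fmat_mult X A C y x"
  by (simp add: fmat_mult_def fmat_vec_def distrib_left sum.distrib)

lemma fmat_mult_diff_left:
  fixes A :: "('a, 'b::comm_ring) fmat"
  shows "fmat_mult X (\<lambda>y x. A y x - B y x) C y x = fmat_mult X A C y x - fmat_mult X B C y x"
  by (simp add: fmat_mult_def fmat_vec_def left_diff_distrib sum_subtractf)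

lemma fmat_mult_diff_right:
  fixes A :: "('a, 'b::comm_ring) fmat"
  shows "fmat_mult X A (\<lambda>y x. B y x - C y x) y x = fmat_mult X A B y x - fmat_mult X A C y x"
  by (simp add: fmat_mult_def fmat_vec_def right_diff_distrib sum_subtractf)

lemma fmat_mult_one_left:
  fixes B :: "('a, 'b::comm_semiring_1) fmat"
  shows "finite X \<Longrightarrow> y \<in> X \<Longrightarrow> fmat_mult X fmat_one B y x = B y x"
  by (simp add: fmat_mult_def fmat_vec_def fmat_one_def if_distrib[of "\<lambda>c. c * _"] cong: if_cong)

lemma fmat_mult_one_right:
  fixes A :: "('a, 'b::comm_semiring_1) fmat"
  shows "finite X \<Longrightarrow> x \<in> X \<Longrightarrow> fmat_mult X A fmat_one y x = A y x"
  by (simp add: fmat_mult_def fmat_vec_def fmat_one_def if_distrib[of "\<lambda>c. _ * c"] cong: if_cong)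

lemma fmat_mult_cong_right:
  "(\<And>z. z \<in> X \<Longrightarrow> B z x = B' z x) \<Longrightarrow> fmat_mult X A B y x = fmat_mult X A B' y x"
  by (simp add: fmat_mult_def fmat_vec_def)

lemma fmat_mult_cong_left:
  "(\<And>z. z \<in> X \<Longrightarrow> A y z = A' y z) \<Longrightarrow> fmat_mult X A B y x = fmat_mult X A' B y x"
  by (simp add: fmat_mult_def fmat_vec_def)

lemma fmat_unitriangular_inverse:
  fixes Q :: "('a, 'b::comm_ring_1) fmat" and h :: "'a \<Rightarrow> nat"
  assumes fin: "finite X" and height: "\<And>x. x \<in> X \<Longrightarrow> h x \<le> 2"
    and tri: "\<And>x y. x \<in> X \<Longrightarrow> y \<in> X \<Longrightarrow> Q y x \<noteq> fmat_one y x \<Longrightarrow> h y < h x"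
  obtains Q' where "\<And>x y. x \<in> X \<Longrightarrow> y \<in> X \<Longrightarrow> fmat_mult X Q Q' y x = fmat_one y x"
    and "\<And>x y. x \<in> X \<Longrightarrow> y \<in> X \<Longrightarrow> fmat_mult X Q' Q y x = fmat_one y x"
proof -
  define N where "N y x = Q y x - fmat_one y x" for y x
  define N2 where "N2 = fmat_mult X N N"
  have Q: "Q = (\<lambda>y x. fmat_one y x + N y x)" by (simp add: N_def)
  have N3: "fmat_mult X N N2 y x = 0" if "y \<in> X" "x \<in> X" for y x
  proof -
    have "N y z * (N z w * N w x) = 0" if "z \<in> X" "w \<in> X" for z w
    proof (rule ccontr)
      assume "N y z * (N z w * N w x) \<noteq> 0"
      then have "Q y z \<noteq> fmat_one y z" "Q z w \<noteq> fmat_one z w" "Q w x \<noteq> fmat_one w x"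
        by (auto simp: N_def)
      then have "h y < h z" "h z < h w" "h w < h x"
        using tri that \<open>y \<in> X\<close> \<open>x \<in> X\<close> by blast+
      with height[OF \<open>x \<in> X\<close>] show False by simp
    qed
    then show ?thesis by (simp add: N2_def fmat_mult_def fmat_vec_def sum_distrib_left sum.neutral)
  qed
  define Q' where "Q' = (\<lambda>y x. fmat_one y x - N y x + N2 y x)"
  show ?thesis
  proof
    fix x y assume xy: "x \<in> X" "y \<in> X"
    have "fmat_mult X Q Q' y x = Q' y x + (N y x - N2 y x + fmat_mult X N N2 y x)"
      by (simp add: Q Q'_def fmat_mult_add_left fmat_mult_add_right fmat_mult_diff_right
          fmat_mult_one_left[OF fin xy(2)] fmat_mult_one_right[OF fin xy(1)] N2_def)
    then show "fmat_mult X Q Q' y x = fmat_one y x"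
      using N3[OF xy(2,1)] by (simp add: Q'_def)
    have "fmat_mult X Q' Q y x = Q y x - (N y x + N2 y x) + (N2 y x + fmat_mult X N2 N y x)"
      by (simp add: Q'_def Q fmat_mult_add_left fmat_mult_diff_left fmat_mult_add_right
          fmat_mult_one_left[OF fin xy(2)] fmat_mult_one_right[OF fin xy(1)] N2_def)
    then show "fmat_mult X Q' Q y x = fmat_one y x"
      using N3[OF xy(2,1)] by (simp add: Q N2_def fmat_mult_assoc[OF fin])
  qed
qed

lemma fchar_poly_unitriangular_conj:
  fixes M Q F :: "('a, 'b::comm_ring_1) fmat" and h :: "'a \<Rightarrow> nat"
  assumes fin: "finite X" and height: "\<And>x. x \<in> X \<Longrightarrow> h x \<le> 2"
    and tri: "\<And>x y. x \<in> X \<Longrightarrow> y \<in> X \<Longrightarrow> Q y x \<noteq> fmat_one y x \<Longrightarrow> h y < h x"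
    and MQ: "\<And>x y. x \<in> X \<Longrightarrow> y \<in> X \<Longrightarrow> fmat_mult X M Q y x = fmat_mult X Q F y x"
  shows "fchar_poly X F = fchar_poly X M"
proof -
  obtain Q' where QQ': "\<And>x y. x \<in> X \<Longrightarrow> y \<in> X \<Longrightarrow> fmat_mult X Q Q' y x = fmat_one y x"
    and Q'Q: "\<And>x y. x \<in> X \<Longrightarrow> y \<in> X \<Longrightarrow> fmat_mult X Q' Q y x = fmat_one y x"
    using fmat_unitriangular_inverse[where h = h and Q = Q, OF fin height tri] by blast
  have "fmat_mult X (fmat_mult X Q' M) Q y x = F y x" if xy: "x \<in> X" "y \<in> X" for x y
  proof -
    have "fmat_mult X (fmat_mult X Q' M) Q y x = fmat_mult X Q' (fmat_mult X M Q) y x"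
      by (simp add: fmat_mult_assoc[OF fin])
    also have "\<dots> = fmat_mult X Q' (fmat_mult X Q F) y x"
      by (rule fmat_mult_cong_right) (rule MQ[OF xy(1)])
    also have "\<dots> = fmat_mult X (fmat_mult X Q' Q) F y x"
      by (simp add: fmat_mult_assoc[OF fin])
    also have "\<dots> = fmat_mult X fmat_one F y x"
      by (rule fmat_mult_cong_left) (rule Q'Q[OF _ xy(2)])
    also have "\<dots> = F y x" by (rule fmat_mult_one_left[OF fin xy(2)])
    finally show ?thesis .
  qed
  then have "fchar_poly X F = fchar_poly X (fmat_mult X (fmat_mult X Q' M) Q)"
    by (intro fchar_poly_cong[OF fin]) simp
  also have "\<dots> = fchar_poly X M" by (rule fchar_poly_similar[OF fin Q'Q QQ'])
  finally show ?thesis .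
qed

section \<open>Products of cyclotomic polynomials\<close>

definition cyclotomic_form :: "complex poly \<Rightarrow> bool" where
  "cyclotomic_form P \<longleftrightarrow> (\<exists>ns d. (\<forall>n\<in>set ns. n \<ge> 1) \<and> P = prod_list (map cyclotomic ns) * monom 1 d)"

lemma cyclotomic_form_monom: "cyclotomic_form (monom 1 d)"
  unfolding cyclotomic_form_def by (intro exI[of _ "[]"] exI[of _ d]) simp

lemma cyclotomic_form_1: "cyclotomic_form 1"
  using cyclotomic_form_monom[of 0] by (simp add: monom_0 one_pCons)

lemma cyclotomic_form_mult:
  assumes "cyclotomic_form P" "cyclotomic_form Q"
  shows "cyclotomic_form (P * Q)"
proof -
  obtain ns1 d1 ns2 d2 where "\<forall>n\<in>set ns1. n \<ge> 1" "P = prod_list (map cyclotomic ns1) * monom 1 d1"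
    "\<forall>n\<in>set ns2. n \<ge> 1" "Q = prod_list (map cyclotomic ns2) * monom 1 d2"
    using assms unfolding cyclotomic_form_def by blast
  then show ?thesis unfolding cyclotomic_form_def
    by (intro exI[of _ "ns1 @ ns2"] exI[of _ "d1 + d2"]) (auto simp: mult_monom algebra_simps)
qed

lemma cyclotomic_form_prod:
  assumes "finite D" "\<And>n. n \<in> D \<Longrightarrow> n \<ge> 1"
  shows "cyclotomic_form (\<Prod>n\<in>D. cyclotomic n)"
  unfolding cyclotomic_form_def
  using assms by (intro exI[of _ "sorted_list_of_set D"] exI[of _ 0])
    (simp add: prod.distinct_set_conv_list[symmetric] monom_0 one_pCons[symmetric])

lemma poly_cyclotomic_eq_0_iff:
  "poly (cyclotomic n) z = 0 \<longleftrightarrow> (\<exists>j. j < n \<and> coprime j n \<and> z = cis (2 * pi * real j / real n))"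
  unfolding cyclotomic_def by (subst poly_prod_0) auto

lemma cyclotomic_nonzero: "cyclotomic n \<noteq> 0"
  unfolding cyclotomic_def by (subst prod_zero_iff) auto

lemma poly_prod_cyclotomic_0: "poly (prod_list (map cyclotomic ns)) 0 \<noteq> 0"
proof -
  have "poly (cyclotomic n) 0 \<noteq> 0" for n
    unfolding poly_cyclotomic_eq_0_iff by (auto simp: cis_neq_zero[symmetric])
  then show ?thesis by (induction ns) auto
qed

lemma poly_cyclotomic_primitive_root:
  assumes "n \<ge> 1" shows "poly (cyclotomic n) (cis (2 * pi / real n)) = 0"
proof (cases "n = 1")
  case True
  then show ?thesis unfolding poly_cyclotomic_eq_0_iff by (intro exI[of _ 0]) (simp add: complex_eq_iff)
next
  case False
  then show ?thesis using assms unfolding poly_cyclotomic_eq_0_iff by (intro exI[of _ 1]) simp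
qed

lemma cis_eq_imp_int: assumes "cis a = cis b" shows "\<exists>t::int. a - b = 2 * pi * real_of_int t"
proof -
  have "cis (a - b) = 1" using assms cis_divide[of a b] by simp
  then have "cos (a - b) = 1" by (metis cis.sel(1) one_complex.sel(1))
  then obtain t :: int where "a - b = real_of_int t * 2 * pi" using cos_one_2pi_int by blast
  then show ?thesis by (intro exI[of _ t]) simp
qed

lemma primitive_root_of_unity_unique:
  assumes n: "n \<ge> 1" and n': "n' \<ge> 1" and j: "j < n'" "coprime j n'"
    and eq: "cis (2 * pi / real n) = cis (2 * pi * real j / real n')"
  shows "n = n'"
proof -
  obtain t :: int where "2 * pi / real n - 2 * pi * real j / real n' = 2 * pi * real_of_int t"
    using cis_eq_imp_int[OF eq] by blast
  then have "(2 * pi) * (1 / real n - real j / real n') = (2 * pi) * real_of_int t"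
    by (simp add: right_diff_distrib)
  then have t: "1 / real n - real j / real n' = real_of_int t" by simp
  have b1: "0 < 1 / real n" "1 / real n \<le> 1" using n by (auto simp: field_simps)
  have b2: "0 \<le> real j / real n'" "real j / real n' < 1" using j n' by (auto simp: field_simps)
  have "t = 0 \<or> t = 1"
  proof -
    have "real_of_int t > -1" "real_of_int t \<le> 1" using t b1 b2 by linarith+
    then show ?thesis by linarith
  qed
  then show ?thesis
  proof
    assume "t = 0"
    then have "real n' = real j * real n" using t n n' by (simp add: field_simps)
    then have nj: "n' = j * n" by (metis of_nat_eq_iff of_nat_mult)
    with j(2) have "j = 1" by (metis coprime_common_divisor_nat dvd_refl dvd_triv_left)
    with nj show ?thesis by simp
  next
    assume "t = 1"
    with t b1 b2 have "1 / real n = 1" "real j / real n' = 0" by linarith+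
    then have "n = 1" "j = 0" using n n' by (auto simp: field_simps)
    with j(2) show ?thesis by simp
  qed
qed

lemma cyclotomic_factor_mem:
  assumes "n \<ge> 1" "\<forall>n\<in>set ns. n \<ge> 1"
    and "poly (prod_list (map cyclotomic ns) * monom 1 d) (cis (2 * pi / real n)) = 0"
  shows "n \<in> set ns"
proof -
  have "poly (prod_list (map cyclotomic ns)) (cis (2 * pi / real n)) = 0"
    using assms(3) by (simp add: poly_monom)
  then obtain n' where "n' \<in> set ns" "poly (cyclotomic n') (cis (2 * pi / real n)) = 0"
    by (induction ns) auto
  moreover then obtain j where "j < n'" "coprime j n'" "cis (2 * pi / real n) = cis (2 * pi * real j / real n')"
    unfolding poly_cyclotomic_eq_0_iff by blast
  ultimately show ?thesis using primitive_root_of_unity_unique[of n n' j] assms(1,2) by auto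
qed

lemma monom_mult_cancel:
  fixes Q C :: "complex poly"
  assumes C0: "poly C 0 \<noteq> 0" and eq: "monom 1 d1 * Q = C * monom 1 d2"
  shows "Q = C * monom 1 (d2 - d1)"
proof -
  have "d1 \<le> d2"
  proof (rule ccontr)
    assume "\<not> d1 \<le> d2"
    then have "monom 1 d2 * (monom 1 (d1 - d2) * Q) = monom 1 d2 * C"
      using eq by (simp add: mult_monom algebra_simps flip: mult_monom[of 1 "d1 - d2" 1 d2])
    then have "poly (monom 1 (d1 - d2) * Q) 0 = poly C 0" by (simp add: monom_eq_0_iff)
    moreover have "(0::complex) ^ (d1 - d2) = 0" using \<open>\<not> d1 \<le> d2\<close> by simp
    ultimately show False using C0 by (simp add: poly_monom)
  qed
  then have "monom 1 d2 = monom (1::complex) (d2 - d1) * monom 1 d1" by (simp add: mult_monom)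
  with eq have "monom 1 d1 * Q = monom 1 d1 * (C * monom 1 (d2 - d1))"
    by (simp add: algebra_simps)
  then show ?thesis by (simp add: monom_eq_0_iff)
qed

lemma cyclotomic_form_cancel_monom: "cyclotomic_form (monom 1 d * Q) \<Longrightarrow> cyclotomic_form Q"
  unfolding cyclotomic_form_def using monom_mult_cancel[OF poly_prod_cyclotomic_0] by blast

lemma cyclotomic_form_cancel_cyclotomic:
  assumes n: "n \<ge> 1" and "cyclotomic_form (cyclotomic n * Q)"
  shows "cyclotomic_form Q"
proof -
  obtain ns d where ns: "\<forall>n\<in>set ns. n \<ge> 1" and eq: "cyclotomic n * Q = prod_list (map cyclotomic ns) * monom 1 d"
    using assms(2) unfolding cyclotomic_form_def by blast
  have "poly (prod_list (map cyclotomic ns) * monom 1 d) (cis (2 * pi / real n)) = 0"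
    by (simp only: eq[symmetric] poly_mult poly_cyclotomic_primitive_root[OF n] mult_zero_left)
  then have "n \<in> set ns" by (rule cyclotomic_factor_mem[OF n ns])
  then have "cyclotomic n * Q = cyclotomic n * (prod_list (map cyclotomic (remove1 n ns)) * monom 1 d)"
    using eq by (simp add: prod_list_map_remove1[of n ns] mult.assoc)
  then have "Q = prod_list (map cyclotomic (remove1 n ns)) * monom 1 d"
    using cyclotomic_nonzero by simp
  moreover have "\<forall>n\<in>set (remove1 n ns). n \<ge> 1" using ns by (meson notin_set_remove1)
  ultimately show ?thesis unfolding cyclotomic_form_def by blast
qed

lemma cyclotomic_form_cancel:
  assumes "cyclotomic_form P" "cyclotomic_form (P * Q)"
  shows "cyclotomic_form Q"
proof -
  obtain ns d where ns: "\<forall>n\<in>set ns. n \<ge> 1" and P: "P = prod_list (map cyclotomic ns) * monom 1 d"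
    using assms(1) unfolding cyclotomic_form_def by blast
  have "cyclotomic_form (prod_list (map cyclotomic ns) * monom 1 d * Q) \<Longrightarrow> cyclotomic_form Q"
    using ns
  proof (induction ns)
    case Nil
    then show ?case using cyclotomic_form_cancel_monom by simp
  next
    case (Cons n ns)
    then show ?case using cyclotomic_form_cancel_cyclotomic[of n] by (simp add: mult.assoc)
  qed
  then show ?thesis using assms(2) P by simp
qed

lemma prod_roots_dvd:
  fixes P :: "complex poly"
  assumes "finite R" "\<And>r. r \<in> R \<Longrightarrow> poly P r = 0"
  shows "(\<Prod>r\<in>R. [:-r, 1:]) dvd P"
  using assms
proof (induction R rule: finite_induct)
  case empty then show ?case by simp
next
  case (insert r R)
  then obtain G where G: "P = (\<Prod>s\<in>R. [:-s, 1:]) * G" by (auto elim: dvdE)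
  have "poly (\<Prod>s\<in>R. [:-s, 1:]) r \<noteq> 0"
    using insert(1,2) by (subst poly_prod_0) auto
  moreover have "poly P r = 0" using insert by auto
  ultimately have "[:-r, 1:] dvd G" using G by (simp add: poly_eq_0_iff_dvd)
  then have "[:-r, 1:] * (\<Prod>s\<in>R. [:-s, 1:]) dvd G * (\<Prod>s\<in>R. [:-s, 1:])"
    by (rule mult_dvd_mono) simp
  then have "[:-r, 1:] * (\<Prod>s\<in>R. [:-s, 1:]) dvd (\<Prod>s\<in>R. [:-s, 1:]) * G"
    by (simp only: mult.commute[of G])
  then show ?case using insert(1,2) G by simp
qed

lemma monic_eq_prod_roots:
  fixes P :: "complex poly"
  assumes R: "finite R" and deg: "degree P = card R" and lc: "lead_coeff P = 1"
    and roots: "\<And>r. r \<in> R \<Longrightarrow> poly P r = 0"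
  shows "P = (\<Prod>r\<in>R. [:-r, 1:])"
proof -
  define D where "D = (\<Prod>r\<in>R. [:-r, 1:] :: complex poly)"
  obtain G where G: "P = D * G" using prod_roots_dvd[OF R roots] unfolding D_def by (auto elim: dvdE)
  have D0: "D \<noteq> 0" unfolding D_def by (subst prod_zero_iff[OF R]) auto
  have G0: "G \<noteq> 0" using lc G by auto
  have "degree D = card R" unfolding D_def by (subst degree_prod_sum_eq) auto
  then have "degree G = 0" using G deg degree_mult_eq[OF D0 G0] by simp
  moreover have "lead_coeff G = 1"
    using lc G lead_coeff_mult[of D G] by (simp add: D_def lead_coeff_prod)
  ultimately have "G = 1" by (metis degree_0_id one_pCons)
  then show ?thesis using G D_def by simp
qed

definition cycle_mat :: "nat \<Rightarrow> complex mat" where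
  "cycle_mat m = mat m m (\<lambda>(i, j). if i = Suc j mod m then 1 else 0)"

lemma cycle_mat_eigenvalue:
  assumes m: "m \<ge> 1" and r: "r ^ m = 1"
  shows "eigenvalue (cycle_mat m) r"
proof -
  define v where "v = vec m (\<lambda>i. r ^ (m - i))"
  have "cycle_mat m *\<^sub>v v = r \<cdot>\<^sub>v v"
  proof (rule eq_vecI)
    fix i assume "i < dim_vec (r \<cdot>\<^sub>v v)"
    then have i: "i < m" by (simp add: v_def)
    define k0 where "k0 = (if i = 0 then m - 1 else i - 1)"
    have k0: "k0 < m" using i m by (auto simp: k0_def)
    have iff: "i = Suc k mod m \<longleftrightarrow> k = k0" if "k < m" for k
      using that i m by (cases "Suc k = m") (auto simp: k0_def)
    have "(cycle_mat m *\<^sub>v v) $ i = (\<Sum>k<m. (if i = Suc k mod m then 1 else 0) * r ^ (m - k))"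
      using i by (auto simp: cycle_mat_def v_def scalar_prod_def atLeast0LessThan intro!: sum.cong)
    also have "\<dots> = (\<Sum>k<m. if k = k0 then r ^ (m - k) else 0)"
      by (rule sum.cong) (auto simp: iff)
    also have "\<dots> = r ^ (m - k0)" using k0 by simp
    also have "\<dots> = r * r ^ (m - i)"
    proof (cases "i = 0")
      case True
      then show ?thesis using m r by (simp add: k0_def)
    next
      case False
      then have "m - k0 = Suc (m - i)" using i by (simp add: k0_def)
      then show ?thesis by simp
    qed
    finally show "(cycle_mat m *\<^sub>v v) $ i = (r \<cdot>\<^sub>v v) $ i" using i by (simp add: v_def)
  qed (simp add: v_def cycle_mat_def)
  moreover have "v $ 0 \<noteq> 0" using m r by (simp add: v_def)
  then have "v \<noteq> 0\<^sub>v m" using m by auto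
  moreover have "v \<in> carrier_vec m" by (simp add: v_def)
  ultimately show ?thesis
    unfolding eigenvalue_def eigenvector_def by (auto simp: cycle_mat_def)
qed

lemma char_poly_cycle_mat:
  assumes m: "m \<ge> 1"
  shows "char_poly (cycle_mat m) = (\<Prod>j<m. [:- cis (2 * pi * real j / real m), 1:])"
proof -
  define f where "f k = cis (2 * pi * real k / real m)" for k
  have b: "bij_betw f {..<m} {z. z ^ m = 1}" unfolding f_def using m by (intro bij_betw_roots_unity) simp
  then have inj: "inj_on f {..<m}" by (simp add: bij_betw_def)
  have car: "cycle_mat m \<in> carrier_mat m m" by (simp add: cycle_mat_def)
  have "char_poly (cycle_mat m) = (\<Prod>r\<in>f ` {..<m}. [:-r, 1:])"
  proof (rule monic_eq_prod_roots)
    show "degree (char_poly (cycle_mat m)) = card (f ` {..<m})"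
      using degree_monic_char_poly[OF car] card_image[OF inj] by simp
    show "lead_coeff (char_poly (cycle_mat m)) = 1"
      using degree_monic_char_poly[OF car] by simp
    fix r assume "r \<in> f ` {..<m}"
    then have "r ^ m = 1" using b by (auto simp: bij_betw_def)
    then show "poly (char_poly (cycle_mat m)) r = 0"
      using eigenvalue_root_char_poly[OF car] cycle_mat_eigenvalue[OF m] by simp
  qed simp
  also have "\<dots> = (\<Prod>j<m. [:- f j, 1:])" by (rule prod.reindex[OF inj, unfolded comp_def])
  finally show ?thesis by (simp add: f_def)
qed

lemma bij_betw_primitive_root_index:
  fixes m :: nat
  assumes m: "m \<ge> 1"
  shows "bij_betw (\<lambda>(n, j). j * (m div n)) (SIGMA n:{n. n dvd m}. {j. j < n \<and> coprime j n}) {..<m}"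
proof (rule bij_betwI')
  fix x y assume "x \<in> (SIGMA n:{n. n dvd m}. {j. j < n \<and> coprime j n})"
    "y \<in> (SIGMA n:{n. n dvd m}. {j. j < n \<and> coprime j n})"
  then obtain n1 j1 n2 j2 where xy: "x = (n1, j1)" "y = (n2, j2)"
    and d1: "n1 dvd m" "j1 < n1" "coprime j1 n1" and d2: "n2 dvd m" "j2 < n2" "coprime j2 n2"
    by auto
  show "((\<lambda>(n, j). j * (m div n)) x = (\<lambda>(n, j). j * (m div n)) y) = (x = y)"
  proof
    assume "(\<lambda>(n, j). j * (m div n)) x = (\<lambda>(n, j). j * (m div n)) y"
    then have "j1 * (m div n1) = j2 * (m div n2)" by (simp add: xy)
    then have "j1 * n2 * (m div n1 * n1) = j2 * n1 * (m div n2 * n2)"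
      by (metis mult.assoc mult.commute)
    then have "j1 * n2 * m = j2 * n1 * m" using d1(1) d2(1) by simp
    then have e: "j1 * n2 = j2 * n1" using m by simp
    then have "n1 dvd j1 * n2" "n2 dvd j2 * n1" by (metis dvd_triv_right)+
    then have "n1 dvd n2" "n2 dvd n1" using d1(3) d2(3) by (simp_all add: coprime_commute coprime_dvd_mult_right_iff)
    then have "n1 = n2" by (simp add: dvd_antisym)
    moreover then have "j1 = j2" using e d1(2) by simp
    ultimately show "x = y" using xy by simp
  qed simp
next
  fix x assume "x \<in> (SIGMA n:{n. n dvd m}. {j. j < n \<and> coprime j n})"
  then obtain n j where x: "x = (n, j)" and d: "n dvd m" "j < n" by auto
  have "m div n > 0" using d(1) m by (auto simp: dvd_div_eq_0_iff intro: Nat.gr0I)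
  then have "j * (m div n) < n * (m div n)" using d(2) by simp
  then show "(\<lambda>(n, j). j * (m div n)) x \<in> {..<m}" using d(1) by (simp add: x)
next
  fix k assume k: "k \<in> {..<m}"
  define g where "g = gcd k m"
  have g0: "g > 0" using m by (simp add: g_def)
  obtain a b where a: "k = g * a" and b: "m = g * b" unfolding g_def by (meson dvdE gcd_dvd1 gcd_dvd2)
  then have "a < b" using k by simp
  have "coprime a b" using a b g0 m unfolding g_def by (metis div_gcd_coprime gcd_eq_0_iff nonzero_mult_div_cancel_left not_one_le_zero)
  moreover have "b dvd m" using b by simp
  moreover have "m div b = g" using b \<open>a < b\<close> by simp
  ultimately show "\<exists>x\<in>(SIGMA n:{n. n dvd m}. {j. j < n \<and> coprime j n}). k = (\<lambda>(n, j). j * (m div n)) x"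
    using \<open>a < b\<close> a by (intro bexI[of _ "(b, a)"]) auto
qed

lemma prod_roots_of_unity_eq_prod_cyclotomic:
  assumes m: "m \<ge> 1"
  shows "(\<Prod>j<m. [:- cis (2 * pi * real j / real m), 1:]) = (\<Prod>n | n dvd m. cyclotomic n)"
proof -
  define S where "S = (\<lambda>n::nat. {j. j < n \<and> coprime j n})"
  have fin: "finite {n. n dvd m}" using m by simp
  have "(\<Prod>n | n dvd m. cyclotomic n) = (\<Prod>(n, j)\<in>Sigma {n. n dvd m} S. [:- cis (2 * pi * real j / real n), 1:])"
    unfolding cyclotomic_def S_def by (rule prod.Sigma[OF fin]) auto
  also have "\<dots> = (\<Prod>(n, j)\<in>Sigma {n. n dvd m} S. [:- cis (2 * pi * real (j * (m div n)) / real m), 1:])"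
  proof (rule prod.cong[OF refl], clarify)
    fix n j assume "n dvd m"
    then have "real m = real n * real (m div n)" "real (m div n) \<noteq> 0" "n > 0"
      using m by (auto simp: dvd_div_eq_0_iff simp flip: of_nat_mult intro: Nat.gr0I)
    then show "[:- cis (2 * pi * real j / real n), 1:] = [:- cis (2 * pi * real (j * (m div n)) / real m), 1:]"
      by (simp add: field_simps)
  qed
  also have "\<dots> = (\<Prod>j<m. [:- cis (2 * pi * real j / real m), 1:])"
    using prod.reindex_bij_betw[OF bij_betw_primitive_root_index[OF m],
        of "\<lambda>k. [:- cis (2 * pi * real k / real m), 1:]"]
    by (simp add: S_def case_prod_unfold)
  finally show ?thesis by simp
qed

lemma cyclotomic_form_char_poly_cycle_mat:
  assumes "m \<ge> 1" shows "cyclotomic_form (char_poly (cycle_mat m))"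
  unfolding char_poly_cycle_mat[OF assms] prod_roots_of_unity_eq_prod_cyclotomic[OF assms]
  using assms by (intro cyclotomic_form_prod) (auto intro: Nat.gr0I simp: Suc_le_eq)

section \<open>Matrices of partial maps\<close>

definition partial_map_fmat :: "('a \<Rightarrow> 'a option) \<Rightarrow> ('a, complex) fmat" where
  "partial_map_fmat \<phi> y x = (if \<phi> x = Some y then 1 else 0)"

lemma funpow_in_set: "x \<in> X \<Longrightarrow> f ` X \<subseteq> X \<Longrightarrow> (f ^^ i) x \<in> X"
  by (induction i) auto

lemma inj_on_funpow:
  assumes "inj_on f X" "f ` X \<subseteq> X" "x \<in> X" "y \<in> X" "(f ^^ i) x = (f ^^ i) y"
  shows "x = y"
  using assms(5)
proof (induction i)
  case (Suc i)
  then show ?case using assms(1-4) funpow_in_set[of _ X f i] by (simp add: inj_on_eq_iff)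
qed simp

lemma inj_on_self_map_cycle:
  assumes fin: "finite X" and inj: "inj_on f X" and fX: "f ` X \<subseteq> X" and x0: "x0 \<in> X"
  obtains m g where "m \<ge> 1" "inj_on g {..<m}" "g ` {..<m} \<subseteq> X" "g 0 = x0"
    "\<And>j. j < m \<Longrightarrow> f (g j) = g (Suc j mod m)"
proof -
  define g where "g i = (f ^^ i) x0" for i
  have gX: "g i \<in> X" for i unfolding g_def by (rule funpow_in_set[OF x0 fX])
  have cancel: "(f ^^ (b - a)) x0 = x0" if "a < b" "g a = g b" for a b
  proof -
    have "(f ^^ a) ((f ^^ (b - a)) x0) = (f ^^ a) x0"
      using that by (simp add: g_def funpow_add[symmetric, THEN fun_cong, simplified comp_def])
    then show ?thesis by (rule inj_on_funpow[OF inj fX funpow_in_set[OF x0 fX] x0])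
  qed
  have "\<not> inj_on g {..card X}"
  proof
    assume "inj_on g {..card X}"
    then have "card (g ` {..card X}) = Suc (card X)" by (simp add: card_image)
    moreover have "card (g ` {..card X}) \<le> card X" using gX fin by (intro card_mono) auto
    ultimately show False by simp
  qed
  then obtain a b where "a < b" "g a = g b" unfolding inj_on_def by (metis linorder_neqE_nat)
  then have ex: "\<exists>d>0. (f ^^ d) x0 = x0" using cancel by (intro exI[of _ "b - a"]) auto
  define m where "m = (LEAST d. d > 0 \<and> (f ^^ d) x0 = x0)"
  have m: "m > 0" "(f ^^ m) x0 = x0"
    using LeastI_ex[OF ex] unfolding m_def by auto
  have ginj: "inj_on g {..<m}"
  proof (rule inj_onI, rule ccontr)
    fix a b assume "a \<in> {..<m}" "b \<in> {..<m}" "g a = g b" "a \<noteq> b"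
    then obtain a' b' where "a' < b'" "b' < m" "g a' = g b'" by (metis lessThan_iff linorder_neqE_nat)
    then have "(f ^^ (b' - a')) x0 = x0" "0 < b' - a'" "b' - a' < m" by (auto intro: cancel)
    then show False
      using not_less_Least[of "b' - a'" "\<lambda>d. d > 0 \<and> (f ^^ d) x0 = x0"] unfolding m_def by blast
  qed
  have gstep: "f (g j) = g (Suc j mod m)" if "j < m" for j
  proof (cases "Suc j = m")
    case True
    then have "f (g j) = (f ^^ m) x0" by (simp add: g_def flip: True)
    then show ?thesis using m True by (simp add: g_def)
  next
    case False
    then show ?thesis using that by (simp add: g_def)
  qed
  show ?thesis
    by (rule that[OF _ ginj _ _ gstep]) (use m(1) gX in \<open>auto simp: g_def\<close>)
qed

lemma fchar_poly_partial_map_cycle: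
  assumes m: "m \<ge> 1" and g: "inj_on g {..<m}" and step: "\<And>j. j < m \<Longrightarrow> \<phi> (g j) = Some (g (Suc j mod m))"
  shows "fchar_poly (g ` {..<m}) (partial_map_fmat \<phi>) = char_poly (cycle_mat m)"
proof -
  have "mat m m (\<lambda>(i, j). partial_map_fmat \<phi> (g i) (g j)) = cycle_mat m"
  proof (rule eq_matI)
    fix i j assume "i < dim_row (cycle_mat m)" "j < dim_col (cycle_mat m)"
    then have ij: "i < m" "j < m" by (auto simp: cycle_mat_def)
    have "partial_map_fmat \<phi> (g i) (g j) = (if g (Suc j mod m) = g i then 1 else 0)"
      using step[OF ij(2)] by (simp add: partial_map_fmat_def)
    also have "\<dots> = (if i = Suc j mod m then 1 else 0)"
      using g ij m by (auto simp: inj_on_def)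
    finally show "mat m m (\<lambda>(i, j). partial_map_fmat \<phi> (g i) (g j)) $$ (i, j) = cycle_mat m $$ (i, j)"
      using ij by (simp add: cycle_mat_def)
  qed (auto simp: cycle_mat_def)
  moreover have "bij_betw g {..<m} (g ` {..<m})" using g by (simp add: bij_betw_def)
  ultimately show ?thesis using fchar_poly_bij[of "g ` {..<m}" g m "partial_map_fmat \<phi>"] by simp
qed

lemma partial_map_onto_bij:
  assumes fin: "finite X" and onto: "\<forall>y\<in>X. \<exists>x\<in>X. \<phi> x = Some y"
  obtains f where "\<And>x. x \<in> X \<Longrightarrow> \<phi> x = Some (f x)" "inj_on f X" "f ` X = X"
proof -
  define f where "f x = the (\<phi> x)" for x
  define D where "D = {x\<in>X. \<exists>y\<in>X. \<phi> x = Some y}"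
  have D: "D \<subseteq> X" "finite D" using fin by (auto simp: D_def)
  have "X \<subseteq> f ` D"
  proof
    fix y assume "y \<in> X"
    then obtain x where "x \<in> X" "\<phi> x = Some y" using onto by blast
    then have "x \<in> D" "f x = y" using \<open>y \<in> X\<close> by (auto simp: D_def f_def)
    then show "y \<in> f ` D" by (intro image_eqI[of y f x]) simp_all
  qed
  then have "card X \<le> card (f ` D)" using D(2) by (intro card_mono) auto
  also have "\<dots> \<le> card D" by (rule card_image_le[OF D(2)])
  finally have "card D = card X" using card_mono[OF fin D(1)] by simp
  then have "D = X" by (rule card_subset_eq[OF fin D(1)])
  have \<phi>f: "\<phi> x = Some (f x)" and fX: "f x \<in> X" if "x \<in> X" for x
  proof -
    have "x \<in> D" using that \<open>D = X\<close> by simp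
    then obtain y where "y \<in> X" "\<phi> x = Some y" by (auto simp: D_def)
    then show "\<phi> x = Some (f x)" "f x \<in> X" by (simp_all add: f_def)
  qed
  have "f ` X = X"
  proof
    show "X \<subseteq> f ` X"
    proof
      fix y assume "y \<in> X"
      then obtain x where "x \<in> X" "\<phi> x = Some y" using onto by blast
      then show "y \<in> f ` X" using \<phi>f[of x] by (simp add: rev_image_eqI)
    qed
  qed (use fX in auto)
  moreover from this have "inj_on f X" using fin by (simp add: eq_card_imp_inj_on)
  ultimately show ?thesis using that \<phi>f by blast
qed

lemma partial_map_onto_cycle:
  assumes fin: "finite X" and onto: "\<forall>y\<in>X. \<exists>x\<in>X. \<phi> x = Some y" and x0: "x0 \<in> X"
  obtains m C where "m \<ge> 1" "x0 \<in> C" "C \<subseteq> X" "\<And>x y. x \<in> C \<Longrightarrow> y \<in> X - C \<Longrightarrow> partial_map_fmat \<phi> y x = 0"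
    "fchar_poly C (partial_map_fmat \<phi>) = char_poly (cycle_mat m)"
proof -
  obtain f where \<phi>f: "\<And>x. x \<in> X \<Longrightarrow> \<phi> x = Some (f x)" and inj: "inj_on f X" and fX: "f ` X = X"
    using partial_map_onto_bij[OF fin onto] by blast
  obtain m g where m: "m \<ge> 1" and g: "inj_on g {..<m}" "g ` {..<m} \<subseteq> X" "g 0 = x0"
    and gf: "\<And>j. j < m \<Longrightarrow> f (g j) = g (Suc j mod m)"
    using inj_on_self_map_cycle[OF fin inj equalityD1[OF fX] x0] by blast
  have step: "\<phi> (g j) = Some (g (Suc j mod m))" if "j < m" for j
    using gf[OF that] \<phi>f[of "g j"] g(2) that by auto
  show ?thesis
  proof (rule that[OF m _ g(2)])
    show "x0 \<in> g ` {..<m}" using g(3) m by (intro image_eqI[of x0 g 0]) auto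
    show "partial_map_fmat \<phi> y x = 0" if "x \<in> g ` {..<m}" "y \<in> X - g ` {..<m}" for x y
      using that step by (auto simp: partial_map_fmat_def)
    show "fchar_poly (g ` {..<m}) (partial_map_fmat \<phi>) = char_poly (cycle_mat m)"
      by (rule fchar_poly_partial_map_cycle[OF m g(1) step])
  qed
qed

lemma cyclotomic_form_fchar_poly_partial_map:
  assumes "finite X"
  shows "cyclotomic_form (fchar_poly X (partial_map_fmat \<phi>))"
  using assms
proof (induction "card X" arbitrary: X rule: less_induct)
  case less
  note fin = less.prems
  let ?M = "partial_map_fmat \<phi>"
  consider "X = {}" | x0 where "x0 \<in> X" "\<forall>x\<in>X. \<phi> x \<noteq> Some x0" | "X \<noteq> {}" "\<forall>y\<in>X. \<exists>x\<in>X. \<phi> x = Some y"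
    by blast
  then show ?case
  proof cases
    case 1
    then show ?thesis by (simp add: fchar_poly_empty cyclotomic_form_1)
  next
    case 2
    have "fchar_poly ((X - {x0}) \<union> {x0}) ?M = fchar_poly (X - {x0}) ?M * fchar_poly {x0} ?M"
      using 2 fin by (intro fchar_poly_invariant_subset) (auto simp: partial_map_fmat_def)
    moreover have "(X - {x0}) \<union> {x0} = X" using 2 by auto
    moreover have "fchar_poly {x0} ?M = monom 1 1"
      using 2 by (simp add: fchar_poly_singleton partial_map_fmat_def monom_Suc monom_0)
    moreover have "cyclotomic_form (fchar_poly (X - {x0}) ?M)"
      by (rule less.hyps[OF card_Diff1_less[OF fin 2(1)]]) (use fin in simp)
    ultimately show ?thesis by (simp add: cyclotomic_form_mult cyclotomic_form_monom)
  next
    case 3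
    then obtain x0 where "x0 \<in> X" by blast
    with 3 obtain m C where m: "m \<ge> 1" and C: "x0 \<in> C" "C \<subseteq> X"
      and inv: "\<And>x y. x \<in> C \<Longrightarrow> y \<in> X - C \<Longrightarrow> ?M y x = 0" and cycle: "fchar_poly C ?M = char_poly (cycle_mat m)"
      using partial_map_onto_cycle[OF fin] by metis
    have "fchar_poly (C \<union> (X - C)) ?M = fchar_poly C ?M * fchar_poly (X - C) ?M"
      using C fin inv by (intro fchar_poly_invariant_subset) (auto intro: finite_subset)
    moreover have "C \<union> (X - C) = X" using C by auto
    moreover have "X - C \<subset> X" using C by blast
    then have "cyclotomic_form (fchar_poly (X - C) ?M)"
      by (rule less.hyps[OF psubset_card_mono[OF fin]]) (use fin in simp)
    ultimately show ?thesis
      using cyclotomic_form_mult cyclotomic_form_char_poly_cycle_mat[OF m] cycle by simp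
  qed
qed

section \<open>Canonical representatives of the quotient wedge\<close>

definition canon :: "nat \<Rightarrow> nat \<Rightarrow> nat \<Rightarrow> nat" where
  "canon K q i = (if i \<le> q then i else q + 1 + (i - q - 1) mod K)"

definition sort_pair :: "nat \<times> nat \<Rightarrow> nat \<times> nat" where
  "sort_pair v = (min (fst v) (snd v), max (fst v) (snd v))"

definition canon_pair :: "nat \<Rightarrow> nat \<Rightarrow> nat \<times> nat \<Rightarrow> nat \<times> nat" where
  "canon_pair K q v = sort_pair (canon K q (fst v), canon K q (snd v))"

definition reps :: "nat \<Rightarrow> nat \<Rightarrow> (nat \<times> nat) set" where
  "reps K q = {(a, b). 1 \<le> a \<and> a \<le> b \<and> b \<le> q + K}"

lemma sort_pair_swap: "sort_pair (a, b) = sort_pair (b, a)"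
  by (simp add: sort_pair_def min.commute max.commute)

lemma sort_pair_eq_iff: "sort_pair (a, b) = sort_pair (c, d) \<longleftrightarrow> (a = c \<and> b = d) \<or> (a = d \<and> b = c)"
  by (auto simp: sort_pair_def min_def max_def split: if_splits)

lemma canon_ge1: "1 \<le> i \<Longrightarrow> 1 \<le> canon K q i"
  by (simp add: canon_def)

lemma canon_le:
  assumes "K \<ge> 1" shows "canon K q i \<le> q + K"
proof -
  have "(i - q - 1) mod K < K" using assms by simp
  then show ?thesis by (simp add: canon_def)
qed

lemma canon_id: "1 \<le> i \<Longrightarrow> i \<le> q + K \<Longrightarrow> canon K q i = i"
  by (simp add: canon_def)

lemma canon_idem: "K \<ge> 1 \<Longrightarrow> canon K q (canon K q i) = canon K q i"
  by (simp add: canon_def)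

lemma canon_canon_mult: "canon p q (canon (k * p) q i) = canon p q i"
  by (simp add: canon_def mod_mod_cancel)

lemma canon_Suc_canon: "K \<ge> 1 \<Longrightarrow> canon K q (Suc (canon K q i)) = canon K q (Suc i)"
proof (cases "i \<le> q")
  case False
  then have "i - q = Suc (i - q - 1)" by simp
  then have "Suc ((i - q - 1) mod K) mod K = (i - q) mod K" by (simp only: mod_Suc_eq)
  then show ?thesis using False by (simp add: canon_def)
qed (simp add: canon_def)

lemma eqv_nat_iff_canon:
  assumes "1 \<le> i" "1 \<le> j"
  shows "eqv_nat K q i j \<longleftrightarrow> canon K q i = canon K q j"
proof (cases "i \<le> q \<or> j \<le> q")
  case False
  then have "int (i - q - 1) - int (j - q - 1) = int i - int j" by simp
  then have "(i - q - 1) mod K = (j - q - 1) mod K \<longleftrightarrow> i mod K = j mod K"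
    by (simp only: mod_eq_iff_dvd_symdiff_nat)
  then show ?thesis using False unfolding eqv_nat_def canon_def by auto
qed (auto simp: eqv_nat_def canon_def)

lemma eqv_wedge_iff_canon_pair:
  assumes "v \<in> wedge" "w \<in> wedge"
  shows "eqv_wedge K q v w \<longleftrightarrow> canon_pair K q v = canon_pair K q w"
  using assms eqv_nat_iff_canon
  by (auto simp: eqv_wedge_def canon_pair_def sort_pair_eq_iff wedge_def)

lemma sort_pair_in_reps: "1 \<le> a \<Longrightarrow> 1 \<le> b \<Longrightarrow> a \<le> q + K \<Longrightarrow> b \<le> q + K \<Longrightarrow> sort_pair (a, b) \<in> reps K q"
  by (auto simp: sort_pair_def reps_def)

lemma finite_reps: "finite (reps K q)"
  by (rule finite_subset[of _ "{1..q + K} \<times> {1..q + K}"]) (auto simp: reps_def)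

lemma reps_subset_wedge: "reps K q \<subseteq> wedge"
  by (auto simp: reps_def wedge_def)

lemma canon_pair_reps: "x \<in> reps K q \<Longrightarrow> canon_pair K q x = x"
  by (auto simp: reps_def canon_pair_def canon_id sort_pair_def)

lemma canon_pair_in_reps:
  assumes K: "K \<ge> 1" and v: "v \<in> wedge"
  shows "canon_pair K q v \<in> reps K q"
proof -
  have "1 \<le> fst v" "1 \<le> snd v" using v by (auto simp: wedge_def)
  then show ?thesis unfolding canon_pair_def
    by (intro sort_pair_in_reps canon_ge1 canon_le[OF K])
qed

lemma wclass_eq_canon_pair:
  "v \<in> wedge \<Longrightarrow> wclass K q v = {w \<in> wedge. canon_pair K q w = canon_pair K q v}"
  unfolding wclass_def using eqv_wedge_iff_canon_pair by metis

lemma wclass_canon_pair: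
  assumes "K \<ge> 1" "v \<in> wedge"
  shows "wclass K q (canon_pair K q v) = wclass K q v"
proof -
  have c: "canon_pair K q v \<in> reps K q" by (rule canon_pair_in_reps[OF assms])
  then have "canon_pair K q v \<in> wedge" using reps_subset_wedge by blast
  then show ?thesis
    using wclass_eq_canon_pair[OF assms(2)] wclass_eq_canon_pair[of "canon_pair K q v"] canon_pair_reps[OF c]
    by simp
qed

lemma quot_vertices_eq_image_reps:
  assumes K: "K \<ge> 1"
  shows "quot_vertices K q = wclass K q ` reps K q"
  unfolding quot_vertices_def
proof
  show "wclass K q ` wedge \<subseteq> wclass K q ` reps K q"
  proof
    fix C assume "C \<in> wclass K q ` wedge"
    then obtain v where v: "v \<in> wedge" "C = wclass K q v" by blast
    then have "C = wclass K q (canon_pair K q v)" using wclass_canon_pair[OF K] by simp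
    then show "C \<in> wclass K q ` reps K q" using canon_pair_in_reps[OF K v(1)] by blast
  qed
qed (use reps_subset_wedge in blast)

lemma inj_on_wclass_reps: "inj_on (wclass K q) (reps K q)"
proof (rule inj_onI)
  fix x y assume x: "x \<in> reps K q" and y: "y \<in> reps K q" and "wclass K q x = wclass K q y"
  have xw: "x \<in> wedge" and yw: "y \<in> wedge" using x y reps_subset_wedge by auto
  have "x \<in> wclass K q y"
    using \<open>wclass K q x = wclass K q y\<close> wclass_eq_canon_pair[OF xw, of K q] xw by auto
  then have "canon_pair K q x = canon_pair K q y" using wclass_eq_canon_pair[OF yw] by simp
  then show "x = y" using canon_pair_reps[OF x] canon_pair_reps[OF y] by simp
qed

lemma wclass_reps_iff:
  assumes "y \<in> reps K q"
  shows "t \<in> wclass K q y \<longleftrightarrow> t \<in> wedge \<and> canon_pair K q t = y"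
proof -
  have "y \<in> wedge" using assms reps_subset_wedge by blast
  then show ?thesis using wclass_eq_canon_pair[of y K q] canon_pair_reps[OF assms] by auto
qed

lemma some_wclass_rep:
  assumes K: "K \<ge> 1" and x: "x \<in> reps K q"
  shows "(SOME v. v \<in> wclass K q x) \<in> wedge \<and> canon_pair K q (SOME v. v \<in> wclass K q x) = x"
proof -
  have "x \<in> wclass K q x" using x by (simp add: wclass_reps_iff canon_pair_reps subsetD[OF reps_subset_wedge])
  then have "(SOME v. v \<in> wclass K q x) \<in> wclass K q x" by (rule someI)
  then show ?thesis using wclass_reps_iff[OF x] by blast
qed

lemma quot_edges_count:
  assumes K: "K \<ge> 1" and x: "x \<in> reps K q" and y: "y \<in> reps K q"
  shows "quot_edges \<Phi> (wclass K q x) (wclass K q y)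
    = count_list (map (canon_pair K q) (edge_targets \<Phi> (SOME v. v \<in> wclass K q x))) y"
proof -
  define v where "v = (SOME v. v \<in> wclass K q x)"
  have "v \<in> wedge" using some_wclass_rep[OF K x] by (simp add: v_def)
  then have "set (edge_targets \<Phi> v) \<subseteq> wedge" by (auto simp: edge_targets_def wedge_def split: label.split)
  moreover have "length (filter (\<lambda>t. t \<in> wclass K q y) ts) = count_list (map (canon_pair K q) ts) y"
    if "set ts \<subseteq> wedge" for ts
    using that by (induction ts) (auto simp: wclass_reps_iff[OF y])
  ultimately show ?thesis unfolding quot_edges_def v_def by simp
qed

lemma periodic_wedge_canon_pair:
  assumes per: "periodic_wedge \<Phi> p q" and v: "v \<in> wedge"
  shows "\<Phi> (canon_pair p q v) = \<Phi> v"
proof -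
  have p: "p \<ge> 1" using per by (simp add: periodic_wedge_def)
  have c: "canon_pair p q v \<in> reps p q" by (rule canon_pair_in_reps[OF p v])
  moreover have cw: "canon_pair p q v \<in> wedge" using c reps_subset_wedge by blast
  ultimately have "eqv_wedge p q v (canon_pair p q v)"
    by (simp add: eqv_wedge_iff_canon_pair[OF v cw] canon_pair_reps)
  then show ?thesis using per v cw unfolding periodic_wedge_def by metis
qed

lemma bij_betw_vertex_enum:
  assumes "K \<ge> 1"
  shows "bij_betw (vertex_enum K q) {..<card (quot_vertices K q)} (quot_vertices K q)"
proof -
  have "finite (quot_vertices K q)" using quot_vertices_eq_image_reps[OF assms] finite_reps by simp
  then have "\<exists>f. bij_betw f {..<card (quot_vertices K q)} (quot_vertices K q)"
    using ex_bij_betw_nat_finite by (simp add: atLeast0LessThan)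
  then show ?thesis unfolding vertex_enum_def by (rule someI_ex)
qed

section \<open>Adjacency operators of the quotient graphs\<close>

locale period_multiple =
  fixes p q k :: nat
  assumes p_pos: "p \<ge> 1" and k_pos: "k \<ge> 1"
begin

abbreviation "top1 \<equiv> q + p"
abbreviation "topk \<equiv> q + k * p"
abbreviation "Vk \<equiv> reps (k * p) q"

lemma kp_pos: "k * p \<ge> 1" using p_pos k_pos by simp
lemma top1_le_topk: "top1 \<le> topk" using k_pos by simp

definition red :: "nat \<Rightarrow> nat" where "red c = canon p q c"
definition nxt :: "nat \<Rightarrow> nat" where "nxt c = canon (k * p) q (Suc c)"

abbreviation high :: "nat \<Rightarrow> bool" where "high c \<equiv> top1 < c"

lemma red_le: "red c \<le> top1" using canon_le[OF p_pos] by (simp add: red_def)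
lemma red_not_high: "\<not> high (red c)" using red_le[of c] by linarith
lemma red_ge1: "1 \<le> c \<Longrightarrow> 1 \<le> red c" unfolding red_def by (rule canon_ge1)
lemma red_id: "1 \<le> c \<Longrightarrow> \<not> high c \<Longrightarrow> red c = c" by (simp add: red_def canon_id)
lemma red_red: "red (red c) = red c" by (simp add: red_def canon_idem[OF p_pos])
lemma nxt_bounds: "1 \<le> nxt c" "nxt c \<le> topk"
  unfolding nxt_def by (rule canon_ge1, simp, rule canon_le[OF kp_pos])
lemma red_nxt: "red (nxt c) = canon p q (Suc c)" by (simp add: red_def nxt_def canon_canon_mult)
lemma red_nxt_bounds: "1 \<le> red (nxt c)" "red (nxt c) \<le> top1"
  by (rule red_ge1[OF nxt_bounds(1)], rule red_le)
lemma red_nxt_red: "red (nxt (red c)) = red (nxt c)"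
  unfolding red_nxt using canon_Suc_canon[OF p_pos, of q c] by (simp add: red_def)

text \<open>The label of a vertex of \<open>\<Gamma>\<^sub>K\<close> is read off from its reduction modulo \<open>\<equiv>\<^sub>p\<^sub>,\<^sub>q\<close>; this is how the
  periodicity of the labelling enters.\<close>

definition targets :: "nat \<Rightarrow> (nat \<Rightarrow> nat \<Rightarrow> label) \<Rightarrow> nat \<times> nat \<Rightarrow> (nat \<times> nat) list" where
  "targets K l v = (case l (red (fst v)) (red (snd v)) of
      E \<Rightarrow> []
    | N \<Rightarrow> [sort_pair (canon K q (Suc (fst v)), canon K q (Suc (snd v)))]
    | S \<Rightarrow> [(1, canon K q (Suc (fst v))), (1, canon K q (Suc (snd v)))])"

definition adj :: "nat \<Rightarrow> (nat \<Rightarrow> nat \<Rightarrow> label) \<Rightarrow> (nat \<times> nat, complex) fmat" where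
  "adj K l y x = of_nat (count_list (targets K l x) y)"

definition unit_vec :: "nat \<Rightarrow> nat \<Rightarrow> nat \<times> nat \<Rightarrow> complex" where
  "unit_vec s t = (\<lambda>y. if y = sort_pair (s, t) then 1 else 0)"

definition diff1 :: "nat \<Rightarrow> nat \<Rightarrow> nat \<times> nat \<Rightarrow> complex" where
  "diff1 a t = (\<lambda>y. unit_vec a t y - unit_vec a (red t) y)"

definition diff2 :: "nat \<Rightarrow> nat \<Rightarrow> nat \<times> nat \<Rightarrow> complex" where
  "diff2 s t = (\<lambda>y. unit_vec s t y - unit_vec s (red t) y - unit_vec (red s) t y + unit_vec (red s) (red t) y)"

definition basis_vec :: "nat \<times> nat \<Rightarrow> nat \<times> nat \<Rightarrow> complex" where
  "basis_vec w = (if high (snd w) then (if high (fst w) then diff2 (fst w) (snd w) else diff1 (fst w) (snd w))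
     else unit_vec (fst w) (snd w))"

definition height :: "nat \<times> nat \<Rightarrow> nat" where
  "height w = (if high (fst w) then 1 else 0) + (if high (snd w) then 1 else 0)"

abbreviation adj_vec :: "(nat \<Rightarrow> nat \<Rightarrow> label) \<Rightarrow> (nat \<times> nat \<Rightarrow> complex) \<Rightarrow> nat \<times> nat \<Rightarrow> complex" where
  "adj_vec l v \<equiv> fmat_vec Vk (adj (k * p) l) v"

abbreviation in_basis :: "(nat \<times> nat \<Rightarrow> complex) \<Rightarrow> nat \<times> nat \<Rightarrow> complex" where
  "in_basis F \<equiv> fmat_vec Vk (\<lambda>y w. basis_vec w y) F"

lemma unit_vec_swap: "unit_vec s t = unit_vec t s" by (simp add: unit_vec_def sort_pair_swap)

lemma diff2_swap: "diff2 s t = diff2 t s"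
  unfolding diff2_def using unit_vec_swap by (auto intro!: ext)

lemma unit_vec_decomp:
  "unit_vec x y v = diff2 x y v + diff1 (red x) y v + diff1 (red y) x v + unit_vec (red x) (red y) v"
proof -
  have "unit_vec (red y) x = unit_vec x (red y)" "unit_vec (red y) (red x) = unit_vec (red x) (red y)"
    by (rule unit_vec_swap)+
  then show ?thesis by (simp add: diff2_def diff1_def red_red)
qed

lemma diff2_low: "1 \<le> s \<Longrightarrow> \<not> high s \<Longrightarrow> diff2 s t v = 0"
  by (simp add: diff2_def red_id)

lemma diff1_low: "1 \<le> t \<Longrightarrow> \<not> high t \<Longrightarrow> diff1 a t v = 0"
  by (simp add: diff1_def red_id)

lemma height_sort_pair: "height (sort_pair (x, y)) = (if high x then 1 else 0) + (if high y then 1 else 0)"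
  by (auto simp: height_def sort_pair_def min_def max_def)

lemma basis_vec_diag:
  assumes w: "w \<in> Vk" and h: "height w \<le> height y"
  shows "basis_vec w y = fmat_one y w"
proof -
  obtain a b where ab: "w = (a, b)" by (cases w)
  have ab': "1 \<le> a" "a \<le> b" "b \<le> topk" using w ab by (auto simp: reps_def)
  have srtab: "sort_pair (a, b) = (a, b)" using ab' by (simp add: sort_pair_def)
  have ne: "y \<noteq> sort_pair (s, t)" if "height (sort_pair (s, t)) < height w" for s t
    using that h by auto
  show ?thesis
  proof (cases "high b")
    case nb: True
    show ?thesis
    proof (cases "high a")
      case True
      have hw: "height w = 2" using True nb by (simp add: ab height_def)
      have "height (sort_pair (a, red b)) < height w" "height (sort_pair (red a, b)) < height w"
        "height (sort_pair (red a, red b)) < height w"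
        unfolding height_sort_pair hw using red_not_high[of a] red_not_high[of b] by auto
      then have "y \<noteq> sort_pair (a, red b)" "y \<noteq> sort_pair (red a, b)" "y \<noteq> sort_pair (red a, red b)"
        by (auto intro!: ne)
      then show ?thesis using True nb by (simp add: basis_vec_def ab diff2_def unit_vec_def srtab fmat_one_def)
    next
      case False
      have hw: "height w = 1" using False nb by (simp add: ab height_def)
      have "height (sort_pair (a, red b)) < height w"
        unfolding height_sort_pair hw using red_not_high[of b] False by auto
      then have "y \<noteq> sort_pair (a, red b)" by (auto intro!: ne)
      then show ?thesis using False nb by (simp add: basis_vec_def ab diff1_def unit_vec_def srtab fmat_one_def)
    qed
  next
    case False
    then show ?thesis by (simp add: basis_vec_def ab unit_vec_def srtab fmat_one_def)
  qed
qed

lemma basis_vec_unitriangular: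
  assumes "w \<in> Vk" "basis_vec w y \<noteq> fmat_one y w"
  shows "height y < height w"
proof (rule ccontr)
  assume "\<not> height y < height w"
  then show False using basis_vec_diag[OF assms(1), of y] assms(2) by simp
qed

definition adj_unit :: "(nat \<Rightarrow> nat \<Rightarrow> label) \<Rightarrow> nat \<Rightarrow> nat \<Rightarrow> nat \<times> nat \<Rightarrow> complex" where
  "adj_unit l s t = (case l (red s) (red t) of
      N \<Rightarrow> unit_vec (nxt s) (nxt t)
    | S \<Rightarrow> (\<lambda>y. unit_vec 1 (nxt s) y + unit_vec 1 (nxt t) y)
    | E \<Rightarrow> (\<lambda>y. 0))"

lemma adj_unit_swap:
  assumes sym: "\<And>a b. l a b = l b a" shows "adj_unit l s t = adj_unit l t s"
  unfolding adj_unit_def using sym[of "red s" "red t"] unit_vec_swap[of "nxt s" "nxt t"]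
  by (cases "l (red t) (red s)") (auto intro!: ext)

lemma unit_vec_1: "1 \<le> x \<Longrightarrow> unit_vec (Suc 0) x y = (if y = (Suc 0, x) then 1 else 0)"
  by (auto simp: unit_vec_def sort_pair_def)

lemma adj_eq_adj_unit:
  assumes "s \<le> t"
  shows "adj (k * p) l y (s, t) = adj_unit l s t y"
proof -
  have tg: "targets (k * p) l (s, t) = (case l (red s) (red t) of E \<Rightarrow> [] | N \<Rightarrow> [sort_pair (nxt s, nxt t)]
      | S \<Rightarrow> [(1, nxt s), (1, nxt t)])"
    by (simp add: targets_def nxt_def split: label.split)
  show ?thesis
  proof (cases "l (red s) (red t)")
    case N then show ?thesis by (auto simp: adj_def tg adj_unit_def unit_vec_def)
  next
    case S then show ?thesis by (auto simp: adj_def tg adj_unit_def unit_vec_1[OF nxt_bounds(1)])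
  next
    case E then show ?thesis by (simp add: adj_def tg adj_unit_def)
  qed
qed

lemma adj_vec_unit_vec:
  assumes sym: "\<And>a b. l a b = l b a" and s: "1 \<le> s" "s \<le> topk" and t: "1 \<le> t" "t \<le> topk"
  shows "adj_vec l (unit_vec s t) y = adj_unit l s t y"
proof -
  have "sort_pair (s, t) \<in> Vk" using s t by (intro sort_pair_in_reps) auto
  from fmat_vec_indicator[OF finite_reps this, where P = True]
  have "adj_vec l (unit_vec s t) y = adj (k * p) l y (sort_pair (s, t))"
    by (simp add: unit_vec_def)
  also have "\<dots> = adj_unit l s t y"
  proof (cases "s \<le> t")
    case True then show ?thesis by (simp add: sort_pair_def adj_eq_adj_unit)
  next
    case False
    then have "sort_pair (s, t) = (t, s)" by (simp add: sort_pair_def)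
    then show ?thesis using False adj_eq_adj_unit[of t s l y] adj_unit_swap[OF sym, where s = s and t = t] by simp
  qed
  finally show ?thesis .
qed

definition coef2 :: "nat \<Rightarrow> nat \<Rightarrow> nat \<times> nat \<Rightarrow> complex" where
  "coef2 x y = (\<lambda>w'. if high x \<and> high y \<and> w' = sort_pair (x, y) then 1 else 0)"

definition coef1 :: "nat \<Rightarrow> nat \<Rightarrow> nat \<times> nat \<Rightarrow> complex" where
  "coef1 a x = (\<lambda>w'. if high x \<and> w' = (a, x) then 1 else 0)"

definition coef0 :: "nat \<Rightarrow> nat \<Rightarrow> nat \<times> nat \<Rightarrow> complex" where
  "coef0 a b = (\<lambda>w'. if w' = sort_pair (a, b) then 1 else 0)"

lemma in_basis_coef2:
  assumes "1 \<le> x" "x \<le> topk" "1 \<le> y" "y \<le> topk"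
  shows "in_basis (coef2 x y) v = diff2 x y v"
proof -
  have t: "sort_pair (x, y) \<in> Vk" using assms by (intro sort_pair_in_reps) auto
  have "in_basis (coef2 x y) v = (if high x \<and> high y then basis_vec (sort_pair (x, y)) v else 0)"
    using fmat_vec_indicator[OF finite_reps t, of _ "high x \<and> high y"] unfolding coef2_def
    by (simp only: conj_assoc)
  also have "\<dots> = diff2 x y v"
  proof (cases "high x \<and> high y")
    case True
    then have "basis_vec (sort_pair (x, y)) = diff2 (min x y) (max x y)"
      by (simp add: basis_vec_def sort_pair_def min_def max_def)
    also have "\<dots> = diff2 x y" by (cases "x \<le> y") (auto simp: min_def max_def diff2_swap)
    finally show ?thesis using True by simp
  next
    case False
    then show ?thesis using diff2_low[of x y v] diff2_low[of y x v] assms by (auto simp: diff2_swap)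
  qed
  finally show ?thesis .
qed

lemma in_basis_coef1:
  assumes "1 \<le> a" "a \<le> top1" "1 \<le> x" "x \<le> topk"
  shows "in_basis (coef1 a x) v = diff1 a x v"
proof (cases "high x")
  case True
  then have "(a, x) \<in> Vk" using assms by (auto simp: reps_def)
  then have "in_basis (coef1 a x) v = (if high x then basis_vec (a, x) v else 0)"
    unfolding coef1_def by (rule fmat_vec_indicator[OF finite_reps])
  then show ?thesis using True assms by (simp add: basis_vec_def)
next
  case False
  then show ?thesis using diff1_low[of x a v] assms by (simp add: coef1_def fmat_vec_def)
qed

lemma in_basis_coef0:
  assumes "1 \<le> a" "a \<le> top1" "1 \<le> b" "b \<le> top1"
  shows "in_basis (coef0 a b) v = unit_vec a b v"
proof -
  have "sort_pair (a, b) \<in> Vk" using assms top1_le_topk by (intro sort_pair_in_reps) linarith+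
  from fmat_vec_indicator[OF finite_reps this, where P = True]
  have "in_basis (coef0 a b) v = basis_vec (sort_pair (a, b)) v" by (simp add: coef0_def)
  also have "\<dots> = unit_vec (min a b) (max a b) v"
  proof -
    have "\<not> high (max a b)" using assms by simp
    then show ?thesis by (simp add: basis_vec_def sort_pair_def)
  qed
  also have "\<dots> = unit_vec a b v" by (cases "a \<le> b") (auto simp: min_def max_def unit_vec_swap)
  finally show ?thesis .
qed

definition low_col :: "(nat \<Rightarrow> nat \<Rightarrow> label) \<Rightarrow> nat \<Rightarrow> nat \<Rightarrow> nat \<times> nat \<Rightarrow> complex" where
  "low_col l a b = (case l a b of
      N \<Rightarrow> (\<lambda>w'. coef2 (nxt a) (nxt b) w' + coef1 (red (nxt a)) (nxt b) w' + coef1 (red (nxt b)) (nxt a) w'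
        + coef0 (red (nxt a)) (red (nxt b)) w')
    | S \<Rightarrow> (\<lambda>w'. coef1 1 (nxt a) w' + coef0 1 (red (nxt a)) w' + coef1 1 (nxt b) w' + coef0 1 (red (nxt b)) w')
    | E \<Rightarrow> (\<lambda>w'. 0))"

definition mixed_col :: "(nat \<Rightarrow> nat \<Rightarrow> label) \<Rightarrow> nat \<Rightarrow> nat \<Rightarrow> nat \<times> nat \<Rightarrow> complex" where
  "mixed_col l a b = (case l a (red b) of
      N \<Rightarrow> (\<lambda>w'. coef1 (red (nxt a)) (nxt b) w' - coef1 (red (nxt a)) (nxt (red b)) w'
        + coef2 (nxt a) (nxt b) w' - coef2 (nxt a) (nxt (red b)) w')
    | S \<Rightarrow> (\<lambda>w'. coef1 1 (nxt b) w' - coef1 1 (nxt (red b)) w')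
    | E \<Rightarrow> (\<lambda>w'. 0))"

definition high_col :: "(nat \<Rightarrow> nat \<Rightarrow> label) \<Rightarrow> nat \<Rightarrow> nat \<Rightarrow> nat \<times> nat \<Rightarrow> complex" where
  "high_col l a b = (if l (red a) (red b) = N
     then (\<lambda>w'. coef2 (nxt a) (nxt b) w' - coef2 (nxt a) (nxt (red b)) w' - coef2 (nxt (red a)) (nxt b) w'
       + coef2 (nxt (red a)) (nxt (red b)) w')
     else (\<lambda>w'. 0))"

definition new_col :: "(nat \<Rightarrow> nat \<Rightarrow> label) \<Rightarrow> nat \<times> nat \<Rightarrow> nat \<times> nat \<Rightarrow> complex" where
  "new_col l w = (if \<not> high (snd w) then low_col l (fst w) (snd w)
     else if \<not> high (fst w) then mixed_col l (fst w) (snd w) else high_col l (fst w) (snd w))"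

lemma in_basis_coef1_one: "in_basis (coef1 (Suc 0) (nxt c)) v = diff1 (Suc 0) (nxt c) v"
  by (rule in_basis_coef1) (use p_pos nxt_bounds[of c] in auto)

lemmas in_basis_coef =
  in_basis_coef2[OF nxt_bounds nxt_bounds] in_basis_coef1[OF red_nxt_bounds nxt_bounds]
  in_basis_coef1_one in_basis_coef0[OF red_nxt_bounds red_nxt_bounds]

lemma adj_vec_low:
  assumes sym: "\<And>a b. l a b = l b a" and ab: "1 \<le> a" "a \<le> b" "\<not> high b"
  shows "adj_vec l (unit_vec a b) v = in_basis (low_col l a b) v"
proof -
  have red: "red a = a" "red b = b" using ab by (auto intro!: red_id)
  have "b \<le> topk" using ab(3) top1_le_topk by linarith
  then have "adj_vec l (unit_vec a b) v = adj_unit l a b v"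
    using ab by (intro adj_vec_unit_vec[OF sym]) auto
  moreover have "in_basis (coef0 (Suc 0) (red (nxt c))) v = unit_vec (Suc 0) (red (nxt c)) v" for c
    by (rule in_basis_coef0) (use p_pos red_nxt_bounds[of c] in auto)
  ultimately show ?thesis
    using unit_vec_decomp[of "nxt a" "nxt b" v]
    by (cases "l a b") (simp_all add: adj_unit_def low_col_def red diff1_def fmat_vec_add fmat_vec_zero in_basis_coef)
qed

lemma adj_vec_mixed:
  assumes sym: "\<And>a b. l a b = l b a" and ab: "1 \<le> a" "\<not> high a" "high b" "b \<le> topk"
  shows "adj_vec l (diff1 a b) v = in_basis (mixed_col l a b) v"
proof -
  have red: "red a = a" using ab by (auto intro!: red_id)
  have "adj_vec l (diff1 a b) v = adj_unit l a b v - adj_unit l a (red b) v"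
    using ab red_nxt_bounds top1_le_topk red_le[of b] red_ge1[of b]
    by (simp add: diff1_def fmat_vec_diff adj_vec_unit_vec[OF sym])
  moreover have "l (red a) (red (red b)) = l a (red b)" "l (red a) (red b) = l a (red b)"
    by (simp_all add: red red_red)
  ultimately show ?thesis
    using unit_vec_decomp[of "nxt a" "nxt b" v] unit_vec_decomp[of "nxt a" "nxt (red b)" v]
    by (cases "l a (red b)")
      (simp_all add: adj_unit_def mixed_col_def diff1_def red_nxt_red fmat_vec_add fmat_vec_diff fmat_vec_zero in_basis_coef)
qed

text \<open>A label \<open>S\<close> sends each vertex to two vertices depending on one coordinate each, so it
  contributes nothing to a double difference.\<close>

lemma adj_vec_high:
  assumes sym: "\<And>a b. l a b = l b a" and ab: "high a" "high b" "a \<le> topk" "b \<le> topk"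
  shows "adj_vec l (diff2 a b) v = in_basis (high_col l a b) v"
proof -
  have "adj_vec l (diff2 a b) v
      = adj_unit l a b v - adj_unit l a (red b) v - adj_unit l (red a) b v + adj_unit l (red a) (red b) v"
    using ab top1_le_topk red_le[of a] red_le[of b] red_ge1[of a] red_ge1[of b]
    by (simp add: diff2_def fmat_vec_diff fmat_vec_add adj_vec_unit_vec[OF sym])
  then show ?thesis
    using unit_vec_decomp[of "nxt a" "nxt b" v] unit_vec_decomp[of "nxt a" "nxt (red b)" v]
      unit_vec_decomp[of "nxt (red a)" "nxt b" v] unit_vec_decomp[of "nxt (red a)" "nxt (red b)" v]
    by (cases "l (red a) (red b)")
      (simp_all add: adj_unit_def high_col_def red_red red_nxt_red fmat_vec_add fmat_vec_diff fmat_vec_zero in_basis_coef)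
qed

lemma adj_vec_basis_vec:
  assumes sym: "\<And>a b. l a b = l b a" and w: "w \<in> Vk"
  shows "adj_vec l (basis_vec w) v = in_basis (new_col l w) v"
proof -
  obtain a b where ab: "w = (a, b)" "1 \<le> a" "a \<le> b" "b \<le> topk" using w by (auto simp: reps_def)
  then show ?thesis
    using adj_vec_low[OF sym, of a b] adj_vec_mixed[OF sym, of a b] adj_vec_high[OF sym, of a b]
    by (simp add: basis_vec_def new_col_def)
qed

lemma fchar_poly_new_col:
  assumes sym: "\<And>a b. l a b = l b a"
  shows "fchar_poly Vk (\<lambda>w' w. new_col l w w') = fchar_poly Vk (adj (k * p) l)"
proof (rule fchar_poly_unitriangular_conj[OF finite_reps, where h = height and Q = "\<lambda>y w. basis_vec w y"])
  show "height w \<le> 2" for w by (simp add: height_def)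
  show "height y < height w" if "w \<in> Vk" "basis_vec w y \<noteq> fmat_one y w" for w y
    using basis_vec_unitriangular that by blast
  show "fmat_mult Vk (adj (k * p) l) (\<lambda>y w. basis_vec w y) y w
      = fmat_mult Vk (\<lambda>y w. basis_vec w y) (\<lambda>w' w. new_col l w w') y w" if "w \<in> Vk" for w y
    using adj_vec_basis_vec[OF sym that] by (simp add: fmat_mult_def)
qed

definition mixed_reps :: "(nat \<times> nat) set" where
  "mixed_reps = {(a, b). 1 \<le> a \<and> a \<le> top1 \<and> top1 < b \<and> b \<le> topk}"

definition high_reps :: "(nat \<times> nat) set" where
  "high_reps = {(a, b). top1 < a \<and> a \<le> b \<and> b \<le> topk}"

lemma finite_mixed_reps: "finite mixed_reps"
  by (rule finite_subset[of _ "{1..topk} \<times> {1..topk}"]) (auto simp: mixed_reps_def)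

lemma finite_high_reps: "finite high_reps"
  by (rule finite_subset[of _ "{1..topk} \<times> {1..topk}"]) (auto simp: high_reps_def)

lemma Vk_split: "Vk = high_reps \<union> (mixed_reps \<union> reps p q)"
  by (auto simp: mixed_reps_def high_reps_def reps_def intro: le_trans[OF _ top1_le_topk])

definition mixed_block :: "(nat \<Rightarrow> nat \<Rightarrow> label) \<Rightarrow> (nat \<times> nat, complex) fmat" where
  "mixed_block l w' w = (case l (fst w) (red (snd w)) of
      N \<Rightarrow> coef1 (red (nxt (fst w))) (nxt (snd w)) w' - coef1 (red (nxt (fst w))) (nxt (red (snd w))) w'
    | S \<Rightarrow> coef1 1 (nxt (snd w)) w' - coef1 1 (nxt (red (snd w))) w'
    | E \<Rightarrow> 0)"

lemma coef2_high: "coef2 x y w' \<noteq> 0 \<Longrightarrow> high (fst w') \<and> high (snd w')"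
  by (auto simp: coef2_def sort_pair_def split: if_splits)

lemma coef1_high: "coef1 a x w' \<noteq> 0 \<Longrightarrow> high (snd w') \<and> fst w' = a"
  by (auto simp: coef1_def split: if_splits)

lemma new_col_high_reps:
  assumes "x \<in> high_reps" "\<not> high (fst y)"
  shows "new_col l x y = 0"
proof -
  have "coef2 u v y = 0" for u v using coef2_high[of u v y] assms(2) by auto
  then show ?thesis using assms(1) by (auto simp: new_col_def high_col_def high_reps_def)
qed

lemma new_col_mixed_reps:
  assumes "x \<in> mixed_reps" "\<not> high (fst y)"
  shows "new_col l x y = mixed_block l y x"
proof -
  have "coef2 u v y = 0" for u v using coef2_high[of u v y] assms(2) by auto
  then show ?thesis
    using assms(1) by (auto simp: new_col_def mixed_col_def mixed_block_def mixed_reps_def split: label.split)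
qed

lemma mixed_block_low:
  assumes "\<not> high (snd y)" shows "mixed_block l y x = 0"
proof -
  have "coef1 u v y = 0" for u v using coef1_high[of u v y] assms by auto
  then show ?thesis by (simp add: mixed_block_def split: label.split)
qed

lemma new_col_reps_p:
  assumes x: "x \<in> reps p q" and y: "y \<in> reps p q"
  shows "new_col l x y = adj p l y x"
proof -
  obtain a b where ab: "x = (a, b)" "1 \<le> a" "a \<le> b" "b \<le> top1" using x by (auto simp: reps_def)
  have ny: "\<not> high (fst y)" "\<not> high (snd y)" using y by (auto simp: reps_def)
  have z: "coef2 u v y = 0" "coef1 u v y = 0" for u v
    using coef2_high[of u v y] coef1_high[of u v y] ny by auto
  have red: "red a = a" "red b = b" using ab by (auto intro!: red_id)
  have tg: "targets p l (a, b) = (case l a b of E \<Rightarrow> [] | N \<Rightarrow> [sort_pair (red (nxt a), red (nxt b))]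
      | S \<Rightarrow> [(1, red (nxt a)), (1, red (nxt b))])"
    by (simp add: targets_def red red_nxt split: label.split)
  have s1: "sort_pair (Suc 0, red (nxt c)) = (Suc 0, red (nxt c))" for c
    using red_nxt_bounds(1)[of c] by (simp add: sort_pair_def)
  show ?thesis
    using ab by (cases "l a b") (auto simp: new_col_def low_col_def z adj_def tg coef0_def s1)
qed

lemma fchar_poly_adj_factor:
  assumes sym: "\<And>a b. l a b = l b a"
  shows "fchar_poly Vk (adj (k * p) l)
    = fchar_poly high_reps (\<lambda>w' w. new_col l w w') * fchar_poly mixed_reps (mixed_block l) * fchar_poly (reps p q) (adj p l)"
proof -
  let ?F = "\<lambda>w' w. new_col l w w'"
  have "fchar_poly Vk (adj (k * p) l) = fchar_poly (high_reps \<union> (mixed_reps \<union> reps p q)) ?F"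
    by (simp add: fchar_poly_new_col[OF sym] flip: Vk_split)
  also have "\<dots> = fchar_poly high_reps ?F * fchar_poly (mixed_reps \<union> reps p q) ?F"
    by (intro fchar_poly_invariant_subset finite_high_reps finite_UnI finite_mixed_reps finite_reps)
      (auto simp: new_col_high_reps mixed_reps_def high_reps_def reps_def)
  also have "fchar_poly (mixed_reps \<union> reps p q) ?F = fchar_poly mixed_reps ?F * fchar_poly (reps p q) ?F"
    by (intro fchar_poly_invariant_subset finite_mixed_reps finite_reps)
      (auto simp: new_col_mixed_reps mixed_block_low mixed_reps_def reps_def)
  also have "fchar_poly mixed_reps ?F = fchar_poly mixed_reps (mixed_block l)"
    by (rule fchar_poly_cong[OF finite_mixed_reps]) (simp add: new_col_mixed_reps mixed_reps_def case_prod_beta)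
  also have "fchar_poly (reps p q) ?F = fchar_poly (reps p q) (adj p l)"
    by (rule fchar_poly_cong[OF finite_reps]) (simp add: new_col_reps_p)
  finally show ?thesis by (simp add: mult.assoc)
qed

definition half_reps :: "nat \<Rightarrow> (nat \<times> nat) set" where
  "half_reps K = {(a, c). 1 \<le> a \<and> a \<le> top1 \<and> 1 \<le> c \<and> c \<le> q + K}"

definition half_step :: "nat \<Rightarrow> (nat \<Rightarrow> nat \<Rightarrow> label) \<Rightarrow> nat \<times> nat \<Rightarrow> (nat \<times> nat) option" where
  "half_step K l w = (case l (fst w) (red (snd w)) of
      N \<Rightarrow> Some (red (canon K q (Suc (fst w))), canon K q (Suc (snd w)))
    | S \<Rightarrow> Some (1, canon K q (Suc (snd w)))
    | E \<Rightarrow> None)"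

abbreviation "half_reps_k \<equiv> half_reps (k * p)"

abbreviation half_adj :: "nat \<Rightarrow> (nat \<Rightarrow> nat \<Rightarrow> label) \<Rightarrow> (nat \<times> nat, complex) fmat" where
  "half_adj K l \<equiv> partial_map_fmat (half_step K l)"

definition half_basis :: "nat \<times> nat \<Rightarrow> nat \<times> nat \<Rightarrow> complex" where
  "half_basis w = (\<lambda>y. (if y = w then 1 else 0) - (if high (snd w) \<and> y = (fst w, red (snd w)) then 1 else 0))"

definition half_diff :: "nat \<Rightarrow> nat \<Rightarrow> nat \<times> nat \<Rightarrow> complex" where
  "half_diff b x = (\<lambda>y. (if y = (b, x) then 1 else 0) - (if y = (b, red x) then 1 else 0))"

abbreviation half_adj_vec :: "(nat \<Rightarrow> nat \<Rightarrow> label) \<Rightarrow> (nat \<times> nat \<Rightarrow> complex) \<Rightarrow> nat \<times> nat \<Rightarrow> complex" where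
  "half_adj_vec l v \<equiv> fmat_vec half_reps_k (half_adj (k * p) l) v"

abbreviation in_half_basis :: "(nat \<times> nat \<Rightarrow> complex) \<Rightarrow> nat \<times> nat \<Rightarrow> complex" where
  "in_half_basis F \<equiv> fmat_vec half_reps_k (\<lambda>y w. half_basis w y) F"

definition half_new_col :: "(nat \<Rightarrow> nat \<Rightarrow> label) \<Rightarrow> nat \<times> nat \<Rightarrow> nat \<times> nat \<Rightarrow> complex" where
  "half_new_col l w = (let a = fst w; c = snd w in
    if high c then
      (case l a (red c) of
         N \<Rightarrow> (\<lambda>w'. coef1 (red (nxt a)) (nxt c) w' - coef1 (red (nxt a)) (nxt (red c)) w')
       | S \<Rightarrow> (\<lambda>w'. coef1 1 (nxt c) w' - coef1 1 (nxt (red c)) w')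
       | E \<Rightarrow> (\<lambda>w'. 0))
    else
      (case l a c of
         N \<Rightarrow> (\<lambda>w'. coef1 (red (nxt a)) (nxt c) w' + (if w' = (red (nxt a), red (nxt c)) then 1 else 0))
       | S \<Rightarrow> (\<lambda>w'. coef1 1 (nxt c) w' + (if w' = (1, red (nxt c)) then 1 else 0))
       | E \<Rightarrow> (\<lambda>w'. 0)))"

lemma finite_half_reps: "finite (half_reps K)"
  by (rule finite_subset[of _ "{1..top1} \<times> {1..q + K}"]) (auto simp: half_reps_def)

lemma cyclotomic_form_half_adj: "cyclotomic_form (fchar_poly (half_reps K) (half_adj K l))"
  by (rule cyclotomic_form_fchar_poly_partial_map[OF finite_half_reps])

lemma cyclotomic_form_adj_no_S:
  assumes no_S: "\<And>a b. l a b \<noteq> S"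
  shows "cyclotomic_form (fchar_poly (reps K q) (adj K l))"
proof -
  have "fchar_poly (reps K q) (adj K l)
      = fchar_poly (reps K q) (partial_map_fmat (\<lambda>x. case targets K l x of [] \<Rightarrow> None | t # _ \<Rightarrow> Some t))"
  proof (rule fchar_poly_cong[OF finite_reps])
    fix x y
    show "adj K l y x = partial_map_fmat (\<lambda>x. case targets K l x of [] \<Rightarrow> None | t # _ \<Rightarrow> Some t) y x"
      using no_S[of "red (fst x)" "red (snd x)"]
      by (cases "l (red (fst x)) (red (snd x))") (auto simp: adj_def targets_def partial_map_fmat_def)
  qed
  then show ?thesis using cyclotomic_form_fchar_poly_partial_map[OF finite_reps] by simp
qed

lemma half_basis_unitriangular: "half_basis w y \<noteq> fmat_one y w \<Longrightarrow> high (snd w) \<and> \<not> high (snd y)"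
  using red_not_high by (auto simp: half_basis_def fmat_one_def split: if_splits)

lemma in_half_basis_coef1:
  assumes "1 \<le> b" "b \<le> top1" "1 \<le> x" "x \<le> topk"
  shows "in_half_basis (coef1 b x) v = half_diff b x v"
proof (cases "high x")
  case True
  then have "(b, x) \<in> half_reps_k" using assms by (auto simp: half_reps_def)
  then have "in_half_basis (coef1 b x) v = (if high x then half_basis (b, x) v else 0)"
    unfolding coef1_def by (rule fmat_vec_indicator[OF finite_half_reps])
  then show ?thesis using True by (simp add: half_basis_def half_diff_def)
next
  case False
  then have "red x = x" using assms by (intro red_id) auto
  then show ?thesis using False by (simp add: coef1_def fmat_vec_def half_diff_def)
qed

lemma in_half_basis_indicator:
  assumes "1 \<le> b" "b \<le> top1" "1 \<le> x" "x \<le> top1"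
  shows "in_half_basis (\<lambda>w'. if w' = (b, x) then 1 else 0) v = (if v = (b, x) then 1 else 0)"
proof -
  have "x \<le> topk" using assms(4) top1_le_topk by linarith
  then have "(b, x) \<in> half_reps_k" using assms by (auto simp: half_reps_def)
  then have "in_half_basis (\<lambda>w'. if True \<and> w' = (b, x) then 1 else 0) v = (if True then half_basis (b, x) v else 0)"
    by (rule fmat_vec_indicator[OF finite_half_reps])
  then show ?thesis using assms by (simp add: half_basis_def)
qed

lemma half_adj_vec_indicator:
  assumes "t \<in> half_reps_k"
  shows "half_adj_vec l (\<lambda>x. if x = t then 1 else 0) y = (if half_step (k * p) l t = Some y then 1 else 0)"
proof -
  have "half_adj_vec l (\<lambda>x. if True \<and> x = t then 1 else 0) y = (if True then half_adj (k * p) l y t else 0)"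
    by (rule fmat_vec_indicator[OF finite_half_reps assms])
  then show ?thesis by (simp add: partial_map_fmat_def)
qed

lemma half_step_kp:
  "half_step (k * p) l (a, c) = (case l a (red c) of N \<Rightarrow> Some (red (nxt a), nxt c) | S \<Rightarrow> Some (1, nxt c) | E \<Rightarrow> None)"
  by (simp add: half_step_def nxt_def split: label.split)

lemma in_half_basis_coef1_nxt:
  "in_half_basis (coef1 (Suc 0) (nxt x)) v = half_diff (Suc 0) (nxt x) v"
  "in_half_basis (coef1 (red (nxt y)) (nxt x)) v = half_diff (red (nxt y)) (nxt x) v"
  by (rule in_half_basis_coef1; use p_pos red_nxt_bounds[of y] nxt_bounds[of x] in simp)+

lemma half_adj_vec_high:
  assumes ac: "(a, c) \<in> half_reps_k" "high c"
  shows "half_adj_vec l (half_basis (a, c)) v = in_half_basis (half_new_col l (a, c)) v"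
proof -
  have "(a, red c) \<in> half_reps_k"
    using ac red_ge1[of c] red_le[of c] top1_le_topk by (auto simp: half_reps_def)
  moreover have "half_basis (a, c) = (\<lambda>y. (if y = (a, c) then 1 else 0) - (if y = (a, red c) then 1 else 0))"
    using ac by (auto simp: half_basis_def)
  ultimately have "half_adj_vec l (half_basis (a, c)) v
      = (if half_step (k * p) l (a, c) = Some v then 1 else 0) - (if half_step (k * p) l (a, red c) = Some v then 1 else 0)"
    using ac(1) by (simp add: fmat_vec_diff half_adj_vec_indicator)
  then show ?thesis
    using ac by (cases "l a (red c)")
      (simp_all add: half_step_kp red_red half_new_col_def fmat_vec_diff fmat_vec_zero in_half_basis_coef1_nxt
        half_diff_def red_nxt_red)
qed

lemma half_adj_vec_low:
  assumes ac: "(a, c) \<in> half_reps_k" "\<not> high c"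
  shows "half_adj_vec l (half_basis (a, c)) v = in_half_basis (half_new_col l (a, c)) v"
proof -
  have red: "red c = c" using ac by (intro red_id) (auto simp: half_reps_def)
  have "half_basis (a, c) = (\<lambda>y. if y = (a, c) then 1 else 0)" using ac by (auto simp: half_basis_def)
  then have "half_adj_vec l (half_basis (a, c)) v = (if half_step (k * p) l (a, c) = Some v then 1 else 0)"
    using ac(1) by (simp add: half_adj_vec_indicator)
  moreover have "in_half_basis (\<lambda>w'. if w' = (b, red (nxt x)) then 1 else 0) v = (if v = (b, red (nxt x)) then 1 else 0)"
    if "1 \<le> b" "b \<le> top1" for b x
    by (rule in_half_basis_indicator) (use that red_nxt_bounds[of x] in auto)
  ultimately show ?thesis
    using ac red red_nxt_bounds p_pos by (cases "l a c")
      (simp_all add: half_step_kp half_new_col_def fmat_vec_add fmat_vec_zero in_half_basis_coef1_nxt half_diff_def)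
qed

lemma fchar_poly_half_new_col:
  "fchar_poly half_reps_k (\<lambda>w' w. half_new_col l w w') = fchar_poly half_reps_k (half_adj (k * p) l)"
proof (rule fchar_poly_unitriangular_conj[OF finite_half_reps, where h = "\<lambda>w. if high (snd w) then 1 else 0"
      and Q = "\<lambda>y w. half_basis w y"])
  show "fmat_mult half_reps_k (half_adj (k * p) l) (\<lambda>y w. half_basis w y) y w
      = fmat_mult half_reps_k (\<lambda>y w. half_basis w y) (\<lambda>w' w. half_new_col l w w') y w"
    if "w \<in> half_reps_k" for w y
    using that half_adj_vec_high[of "fst w" "snd w" l y] half_adj_vec_low[of "fst w" "snd w" l y]
    by (cases "high (snd w)") (simp_all add: fmat_mult_def)
qed (auto dest: half_basis_unitriangular)

lemma half_reps_kp_split: "half_reps_k = mixed_reps \<union> half_reps p"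
  by (auto simp: mixed_reps_def half_reps_def intro: le_trans[OF _ top1_le_topk])

lemma half_new_col_mixed_reps:
  assumes "x \<in> mixed_reps" shows "half_new_col l x y = mixed_block l y x"
  using assms by (auto simp: half_new_col_def mixed_block_def mixed_reps_def split: label.split)

lemma half_new_col_half_reps_p:
  assumes x: "x \<in> half_reps p" and y: "y \<in> half_reps p"
  shows "half_new_col l x y = half_adj p l y x"
proof -
  have "\<not> high (snd y)" using y by (auto simp: half_reps_def)
  then have z: "coef1 u v y = 0" for u v using coef1_high[of u v y] by auto
  obtain a c where ac: "x = (a, c)" "1 \<le> c" "c \<le> top1" using x by (auto simp: half_reps_def)
  have red: "red c = c" using ac by (intro red_id) auto
  have "red (canon p q (Suc a)) = red (nxt a)" "canon p q (Suc c) = red (nxt c)"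
    unfolding red_nxt by (simp_all add: red_def canon_idem[OF p_pos])
  then show ?thesis
    using ac red by (cases "l a c") (auto simp: half_new_col_def z partial_map_fmat_def half_step_def)
qed

lemma fchar_poly_half_adj_factor:
  "fchar_poly half_reps_k (half_adj (k * p) l) = fchar_poly mixed_reps (mixed_block l) * fchar_poly (half_reps p) (half_adj p l)"
proof -
  let ?F = "\<lambda>w' w. half_new_col l w w'"
  have "fchar_poly half_reps_k (half_adj (k * p) l) = fchar_poly (mixed_reps \<union> half_reps p) ?F"
    by (simp add: fchar_poly_half_new_col flip: half_reps_kp_split)
  also have "\<dots> = fchar_poly mixed_reps ?F * fchar_poly (half_reps p) ?F"
    by (intro fchar_poly_invariant_subset finite_mixed_reps finite_half_reps)
      (auto simp: half_new_col_mixed_reps mixed_block_low mixed_reps_def half_reps_def)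
  also have "fchar_poly mixed_reps ?F = fchar_poly mixed_reps (mixed_block l)"
    by (rule fchar_poly_cong[OF finite_mixed_reps]) (simp add: half_new_col_mixed_reps)
  also have "fchar_poly (half_reps p) ?F = fchar_poly (half_reps p) (half_adj p l)"
    by (rule fchar_poly_cong[OF finite_half_reps]) (simp add: half_new_col_half_reps_p)
  finally show ?thesis .
qed

lemma cyclotomic_form_mixed_block: "cyclotomic_form (fchar_poly mixed_reps (mixed_block l))"
proof (rule cyclotomic_form_cancel[OF cyclotomic_form_half_adj])
  show "cyclotomic_form (fchar_poly (half_reps p) (half_adj p l) * fchar_poly mixed_reps (mixed_block l))"
    using cyclotomic_form_half_adj[of "k * p" l] by (simp add: fchar_poly_half_adj_factor mult.commute)
qed

definition drop_S :: "(nat \<Rightarrow> nat \<Rightarrow> label) \<Rightarrow> nat \<Rightarrow> nat \<Rightarrow> label" where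
  "drop_S l a b = (if l a b = S then E else l a b)"

lemma fchar_poly_high_block_drop_S:
  "fchar_poly high_reps (\<lambda>w' w. new_col (drop_S l) w w') = fchar_poly high_reps (\<lambda>w' w. new_col l w w')"
  by (rule fchar_poly_cong[OF finite_high_reps]) (auto simp: new_col_def high_col_def high_reps_def drop_S_def)

lemma cyclotomic_form_high_block:
  assumes sym: "\<And>a b. l a b = l b a"
  shows "cyclotomic_form (fchar_poly high_reps (\<lambda>w' w. new_col l w w'))"
proof -
  let ?l = "drop_S l"
  have sym': "\<And>a b. ?l a b = ?l b a" using sym by (simp add: drop_S_def)
  have no_S: "\<And>a b. ?l a b \<noteq> S" by (simp add: drop_S_def)
  have "cyclotomic_form (fchar_poly mixed_reps (mixed_block ?l) * fchar_poly (reps p q) (adj p ?l))"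
    using cyclotomic_form_adj_no_S[where l = ?l, OF no_S]
    by (intro cyclotomic_form_mult cyclotomic_form_mixed_block)
  moreover have "cyclotomic_form (fchar_poly mixed_reps (mixed_block ?l) * fchar_poly (reps p q) (adj p ?l)
      * fchar_poly high_reps (\<lambda>w' w. new_col l w w'))"
    using cyclotomic_form_adj_no_S[where l = ?l and K = "k * p", OF no_S]
    by (simp add: fchar_poly_adj_factor[where l = ?l, OF sym'] fchar_poly_high_block_drop_S mult_ac)
  ultimately show ?thesis by (rule cyclotomic_form_cancel)
qed

lemma fchar_poly_adj_cyclotomic_factor:
  assumes sym: "\<And>a b. l a b = l b a"
  obtains G where "cyclotomic_form G" "fchar_poly Vk (adj (k * p) l) = fchar_poly (reps p q) (adj p l) * G"
proof (rule that)
  show "cyclotomic_form (fchar_poly mixed_reps (mixed_block l) * fchar_poly high_reps (\<lambda>w' w. new_col l w w'))"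
    using cyclotomic_form_high_block[where l = l, OF sym] by (intro cyclotomic_form_mult cyclotomic_form_mixed_block)
  show "fchar_poly Vk (adj (k * p) l)
      = fchar_poly (reps p q) (adj p l) * (fchar_poly mixed_reps (mixed_block l) * fchar_poly high_reps (\<lambda>w' w. new_col l w w'))"
    by (simp add: fchar_poly_adj_factor[where l = l, OF sym] mult_ac)
qed

lemma label_reps:
  assumes per: "periodic_wedge \<Phi> p q" and ldef: "\<And>a b. l a b = \<Phi> (sort_pair (a, b))"
    and v: "v \<in> wedge" and x: "canon_pair (m * p) q v = (x1, x2)"
  shows "\<Phi> v = l (red x1) (red x2)"
proof -
  have "(canon (m * p) q (fst v) = x1 \<and> canon (m * p) q (snd v) = x2) \<or>
      (canon (m * p) q (fst v) = x2 \<and> canon (m * p) q (snd v) = x1)"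
    using x by (simp add: canon_pair_def sort_pair_def min_def max_def split: if_splits)
  then have "canon_pair p q v = sort_pair (red x1, red x2)"
    by (auto simp: canon_pair_def red_def canon_canon_mult sort_pair_swap)
  then show ?thesis using periodic_wedge_canon_pair[OF per v] ldef by simp
qed

lemma quot_edges_reps:
  assumes per: "periodic_wedge \<Phi> p q" and m: "m \<ge> 1" and ldef: "\<And>a b. l a b = \<Phi> (sort_pair (a, b))"
    and x: "x \<in> reps (m * p) q" and y: "y \<in> reps (m * p) q"
  shows "quot_edges \<Phi> (wclass (m * p) q x) (wclass (m * p) q y) = count_list (targets (m * p) l x) y"
proof -
  let ?K = "m * p"
  let ?c = "canon ?K q"
  have K: "?K \<ge> 1" using m p_pos by simp
  obtain v where v: "v \<in> wedge" "canon_pair ?K q v = x"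
    and qe: "quot_edges \<Phi> (wclass ?K q x) (wclass ?K q y) = count_list (map (canon_pair ?K q) (edge_targets \<Phi> v)) y"
    using quot_edges_count[OF K x y] some_wclass_rep[OF K x] by blast
  obtain v1 v2 x1 x2 where vx: "v = (v1, v2)" "x = (x1, x2)" by fastforce
  have sw: "(?c v1 = x1 \<and> ?c v2 = x2) \<or> (?c v1 = x2 \<and> ?c v2 = x1)"
    using v(2) x vx by (auto simp: canon_pair_def sort_pair_def reps_def min_def max_def split: if_splits)
  have cs: "?c (Suc i) = ?c (Suc (?c i))" for i using canon_Suc_canon[OF K] by simp
  have c1: "?c (Suc 0) = 1" by (simp add: canon_def)
  have lab: "\<Phi> v = l (red x1) (red x2)" using label_reps[OF per ldef v(1)] v(2) vx(2) by simp
  have tg: "targets ?K l x = (case l (red x1) (red x2) of E \<Rightarrow> []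
      | N \<Rightarrow> [sort_pair (?c (Suc x1), ?c (Suc x2))] | S \<Rightarrow> [(1, ?c (Suc x1)), (1, ?c (Suc x2))])"
    by (simp add: targets_def vx split: label.split)
  show ?thesis
  proof (cases "l (red x1) (red x2)")
    case N
    then have "map (canon_pair ?K q) (edge_targets \<Phi> v) = [sort_pair (?c (Suc x1), ?c (Suc x2))]"
      using lab sw by (auto simp: edge_targets_def vx canon_pair_def cs[of v1] cs[of v2] sort_pair_swap)
    then show ?thesis using N qe tg by simp
  next
    case S
    have "canon_pair ?K q (1, Suc i) = (1, ?c (Suc (?c i)))" for i
      using canon_ge1[of "Suc i" ?K q] c1 by (simp add: canon_pair_def sort_pair_def cs[of i])
    then have "map (canon_pair ?K q) (edge_targets \<Phi> v) = [(1, ?c (Suc (?c v1))), (1, ?c (Suc (?c v2)))]"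
      using S lab by (simp add: edge_targets_def vx)
    then show ?thesis using S qe tg sw by auto
  next
    case E
    then show ?thesis using lab qe tg by (simp add: edge_targets_def vx)
  qed
qed

lemma char_poly_adj_matrix:
  assumes per: "periodic_wedge \<Phi> p q" and m: "m \<ge> 1" and ldef: "\<And>a b. l a b = \<Phi> (sort_pair (a, b))"
  shows "map_poly complex_of_real (char_poly (adj_matrix \<Phi> (m * p) q)) = fchar_poly (reps (m * p) q) (adj (m * p) l)"
proof -
  let ?K = "m * p"
  let ?W = "wclass ?K q"
  define n where "n = card (quot_vertices ?K q)"
  define f where "f = vertex_enum ?K q"
  have K: "?K \<ge> 1" using m p_pos by simp
  have bW: "bij_betw ?W (reps ?K q) (quot_vertices ?K q)"
    unfolding bij_betw_def using inj_on_wclass_reps quot_vertices_eq_image_reps[OF K] by simp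
  have bf: "bij_betw f {..<n} (quot_vertices ?K q)"
    unfolding f_def n_def by (rule bij_betw_vertex_enum[OF K])
  define g where "g = the_inv_into (reps ?K q) ?W \<circ> f"
  have bg: "bij_betw g {..<n} (reps ?K q)"
    unfolding g_def by (rule bij_betw_trans[OF bf bij_betw_the_inv_into[OF bW]])
  have gP: "g i \<in> reps ?K q" if "i < n" for i using bg that by (auto simp: bij_betw_def)
  have fg: "f i = ?W (g i)" if "i < n" for i
  proof -
    have "f i \<in> quot_vertices ?K q" using bf that by (auto simp: bij_betw_def)
    then show ?thesis unfolding g_def using bW by (simp add: f_the_inv_into_f_bij_betw)
  qed
  have A: "adj_matrix \<Phi> ?K q \<in> carrier_mat n n" by (simp add: adj_matrix_def Let_def n_def)
  have "map_mat complex_of_real (adj_matrix \<Phi> ?K q) = mat n n (\<lambda>(i, j). adj ?K l (g i) (g j))"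
    by (rule eq_matI)
      (auto simp: adj_matrix_def Let_def n_def[symmetric] f_def[symmetric] fg gP adj_def quot_edges_reps[OF per m ldef])
  then have "char_poly (map_mat complex_of_real (adj_matrix \<Phi> ?K q)) = fchar_poly (reps ?K q) (adj ?K l)"
    using fchar_poly_bij[OF finite_reps bg] by simp
  from trans[OF of_real_hom.char_poly_hom[OF A, symmetric] this] show ?thesis by simp
qed

end

theorem theorem5p1:
  fixes \<Phi> :: "(nat \<times> nat) \<Rightarrow> label" and p q :: nat
  assumes "periodic_wedge \<Phi> p q"
  shows "\<forall>k::nat. k \<ge> 1 \<longrightarrow>
    (\<exists>ns :: nat list. \<exists>d :: nat. (\<forall>n\<in>set ns. n \<ge> 1) \<and>
       map_poly complex_of_real (char_poly (adj_matrix \<Phi> (k * p) q)) =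
       map_poly complex_of_real (char_poly (adj_matrix \<Phi> p q)) *
       prod_list (map cyclotomic ns) * monom 1 d)"
proof (intro allI impI)
  fix k :: nat assume k: "k \<ge> 1"
  interpret period_multiple p q k
    using assms k by unfold_locales (simp_all add: periodic_wedge_def)
  define l where "l a b = \<Phi> (sort_pair (a, b))" for a b
  have l: "\<And>a b. l a b = \<Phi> (sort_pair (a, b))" by (simp add: l_def)
  have sym: "\<And>a b. l a b = l b a" by (simp add: l_def sort_pair_swap)
  obtain G where "cyclotomic_form G" "fchar_poly (reps (k * p) q) (adj (k * p) l) = fchar_poly (reps p q) (adj p l) * G"
    using fchar_poly_adj_cyclotomic_factor[where l = l, OF sym] .
  then show "\<exists>ns d. (\<forall>n\<in>set ns. n \<ge> 1) \<and>
      map_poly complex_of_real (char_poly (adj_matrix \<Phi> (k * p) q)) =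
      map_poly complex_of_real (char_poly (adj_matrix \<Phi> p q)) * prod_list (map cyclotomic ns) * monom 1 d"
    using char_poly_adj_matrix[where l = l, OF assms k l] char_poly_adj_matrix[where l = l and m = 1, OF assms _ l]
    unfolding cyclotomic_form_def by (auto simp: mult.assoc)
qed

end
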